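(* Let $P\subset\mathbb{R}^n$ be an $n$-dimensional smooth lattice polytope. Then (1) $\operatorname{codeg}(P)=\operatorname{codeg}_{\mathbb{Q}}(P)=\tau(P)=n+1$ if and only if $P=\Delta_n$; (2) if $P\neq\Delta_n$, then $\operatorname{codeg}_{\mathbb{Q}}(P)\le\tau(P)\le n$.
   Context: $\Delta_n$ denotes the standard $n$-dimensional simplex $\operatorname{Conv}\{0,e_1,\ldots,e_n\}$; lattice polytopes are considered up to lattice (affine unimodular) equivalence. Write $P=\bigcap_{i=1}^r\{x:\langle\rho_i,x\rangle\ge -a_i\}$ with primitive inner facet normals $\rho_i$ and $a_i\in\mathbb{Z}$; $P$ is smooth if each vertex lies on exactly $n$ facet hyperplanes whose normals form a basis of $\mathbb{Z}^n$. $P^{(s)}=\bigcap_i\{\langle\rho_i,x\rangle\ge -a_i+s\}$. For a vertex $m$ with $\{m\}=\bigcap_{i=1}^n\{\langle\rho_i,x\rangle=-a_i\}$, $m(s)$ is defined by $\{m(s)\}=\bigcap_{i=1}^n\{\langle\rho_i,x\rangle=-a_i+s\}$; $P$ is $s$-spanned if $m(s)\in P^{(s)}$ for all vertices $m$. $\operatorname{codeg}(P)=\min\{k\in\mathbb{N}:(kP)^{(1)}\cap\mathbb{Z}^n\ne\emptyset\}$; $\operatorname{codeg}_{\mathbb{Q}}(P)=\inf\{a/b:(aP)^{(b)}\neq\emptyset\}$; $\tau(P)=\inf\{a/b: aP\text{ is }b\text{-spanned}\}$ ($a,b$ positive integers). *)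

theory Defs
  imports "HOL-Analysis.Analysis"
begin

definition lattice_pts :: "(real^'n) set" where
  "lattice_pts = {x. \<forall>i. x $ i \<in> \<int>}"

definition lattice_polytope :: "(real^'n) set \<Rightarrow> bool" where
  "lattice_polytope P \<longleftrightarrow> (\<exists>V. finite V \<and> V \<subseteq> lattice_pts \<and> P = convex hull V)"

definition primitive_vec :: "real^'n \<Rightarrow> bool" where
  "primitive_vec r \<longleftrightarrow> r \<in> lattice_pts \<and> r \<noteq> 0 \<and>
     (\<forall>k::int. k \<noteq> 0 \<and> (\<forall>i. r $ i / of_int k \<in> \<int>) \<longrightarrow> \<bar>k\<bar> = 1)"

definition is_inner_normal :: "(real^'n) set \<Rightarrow> (real^'n) set \<Rightarrow> real^'n \<Rightarrow> bool" where
  "is_inner_normal P F r \<longleftrightarrow> primitive_vec r \<and>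
     (\<exists>c. (\<forall>x\<in>F. r \<bullet> x = c) \<and> (\<forall>x\<in>P. c \<le> r \<bullet> x))"

definition facet_normal :: "(real^'n) set \<Rightarrow> (real^'n) set \<Rightarrow> real^'n" where
  "facet_normal P F = (THE r. is_inner_normal P F r)"

text \<open>The value -a_F, i.e. the minimum of the normal functional on P.\<close>
definition facet_offset :: "(real^'n) set \<Rightarrow> (real^'n) set \<Rightarrow> real" where
  "facet_offset P F = Inf ((\<lambda>x. facet_normal P F \<bullet> x) ` P)"

definition shrink :: "(real^'n) set \<Rightarrow> real \<Rightarrow> (real^'n) set" where
  "shrink P s = {x. \<forall>F. F facet_of P \<longrightarrow> facet_offset P F + s \<le> facet_normal P F \<bullet> x}"

definition smooth_polytope :: "(real^'n) set \<Rightarrow> bool" where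
  "smooth_polytope P \<longleftrightarrow> (\<forall>v. v extreme_point_of P \<longrightarrow>
     (let S = {F. F facet_of P \<and> v \<in> F} in
        card S = CARD('n) \<and>
        (\<forall>z\<in>lattice_pts. \<exists>!c::(real^'n) set \<Rightarrow> int.
            (\<forall>F. F \<notin> S \<longrightarrow> c F = 0) \<and> z = (\<Sum>F\<in>S. of_int (c F) *\<^sub>R facet_normal P F))))"

definition s_spanned :: "(real^'n) set \<Rightarrow> real \<Rightarrow> bool" where
  "s_spanned P s \<longleftrightarrow> (\<forall>m. m extreme_point_of P \<longrightarrow>
     (\<forall>x. (\<forall>F. F facet_of P \<and> m \<in> F \<longrightarrow> facet_normal P F \<bullet> x = facet_offset P F + s)
          \<longrightarrow> x \<in> shrink P s))"

definition codeg :: "(real^'n) set \<Rightarrow> nat" where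
  "codeg P = (LEAST k::nat. k \<ge> 1 \<and> shrink ((\<lambda>x. real k *\<^sub>R x) ` P) 1 \<inter> lattice_pts \<noteq> {})"

definition codeg_Q :: "(real^'n) set \<Rightarrow> real" where
  "codeg_Q P = Inf {real a / real b | a b::nat. a > 0 \<and> b > 0 \<and>
                    shrink ((\<lambda>x. real a *\<^sub>R x) ` P) (real b) \<noteq> {}}"

definition tau :: "(real^'n) set \<Rightarrow> real" where
  "tau P = Inf {real a / real b | a b::nat. a > 0 \<and> b > 0 \<and>
                    s_spanned ((\<lambda>x. real a *\<^sub>R x) ` P) (real b)}"

definition std_simplex :: "(real^'n) set" where
  "std_simplex = convex hull (insert 0 {axis i 1 | i. True})"

definition lattice_equiv :: "(real^'n) set \<Rightarrow> (real^'n) set \<Rightarrow> bool" where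
  "lattice_equiv P Q \<longleftrightarrow> (\<exists>(A::real^'n^'n) t. (\<forall>i j. A $ i $ j \<in> \<int>) \<and> \<bar>det A\<bar> = 1 \<and>
      t \<in> lattice_pts \<and> Q = (\<lambda>x. A *v x + t) ` P)"

end

theory Submission
  imports Defs
begin

(* At a vertex m of a smooth polytope P, the primitive inner normals \<rho>\<^sub>F of the n facets F through m
   form a lattice basis; let u\<^sub>F be the dual basis. Then m + u\<^sub>F \<in> P, every other facet G has
   lattice distance d\<^sub>G \<ge> 1 from m, and \<rho>\<^sub>G \<bullet> u\<^sub>F \<ge> -d\<^sub>G. Hence for k \<ge> n the point
   k m + \<Sum>\<^sub>F u\<^sub>F, which is the vertex (km)(1) of kP, lies in (kP)^(1), except possibly when k = n
   and \<rho>\<^sub>G = -d\<^sub>G \<Sum>\<^sub>F \<rho>\<^sub>F for some G. In that case primitivity gives d\<^sub>G = 1, and P is the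
   unimodular simplex spanned by m and the points m + u\<^sub>F. So kP is 1-spanned for k \<ge> n + 1, and
   also for k = n unless P \<cong> \<Delta>\<^sub>n; this bounds \<tau>(P), and codeg\<^sub>Q(P) \<le> \<tau>(P) because m(b) lies in
   (aP)^(b) whenever aP is b-spanned. Conversely, if P \<cong> \<Delta>\<^sub>n, the facet opposite m has normal
   -\<Sum>\<^sub>F \<rho>\<^sub>F; adding its inequality to those of the facets at m shows that (aP)^(b) \<noteq> {}
   forces a \<ge> (n + 1) b. *)

lemma lattice_pts_add: "x \<in> lattice_pts \<Longrightarrow> y \<in> lattice_pts \<Longrightarrow> x + y \<in> lattice_pts"
  by (simp add: lattice_pts_def)

lemma lattice_pts_diff: "x \<in> lattice_pts \<Longrightarrow> y \<in> lattice_pts \<Longrightarrow> x - y \<in> lattice_pts"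
  by (simp add: lattice_pts_def)

lemma lattice_pts_uminus: "x \<in> lattice_pts \<Longrightarrow> - x \<in> lattice_pts"
  by (simp add: lattice_pts_def)

lemma lattice_pts_scaleR_of_nat: "x \<in> lattice_pts \<Longrightarrow> real k *\<^sub>R x \<in> lattice_pts"
  by (simp add: lattice_pts_def)

lemma lattice_pts_sum: "(\<And>i. i \<in> A \<Longrightarrow> f i \<in> lattice_pts) \<Longrightarrow> sum f A \<in> lattice_pts"
  by (induction A rule: infinite_finite_induct) (auto simp: lattice_pts_def)

lemma axis_in_lattice_pts: "axis i 1 \<in> lattice_pts"
  by (simp add: lattice_pts_def axis_def)

lemma inner_lattice_pts_Ints: "x \<in> lattice_pts \<Longrightarrow> y \<in> lattice_pts \<Longrightarrow> x \<bullet> y \<in> \<int>"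
  by (auto simp: lattice_pts_def inner_vec_def intro!: Ints_sum Ints_mult)

lemma lattice_pts_int_coords:
  assumes "r \<in> lattice_pts"
  obtains z :: "'n::finite \<Rightarrow> int" where "\<And>i. (r :: real^'n) $ i = of_int (z i)"
proof -
  have "\<forall>i. \<exists>z. r $ i = of_int z" using assms by (auto simp: lattice_pts_def elim!: Ints_cases)
  then show ?thesis using that by metis
qed

lemma Ints_ge_1_if_pos: "(x::real) \<in> \<int> \<Longrightarrow> x > 0 \<Longrightarrow> x \<ge> 1"
  by (erule Ints_cases) simp

lemma Ints_eq_0_if_nonneg_less_1: "(x::real) \<in> \<int> \<Longrightarrow> x \<ge> 0 \<Longrightarrow> x < 1 \<Longrightarrow> x = 0"
  by (erule Ints_cases) simp

lemma dvd_if_Ints_divide: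
  assumes "(of_int a :: real) / of_int k \<in> \<int>" "k \<noteq> 0"
  shows "k dvd a"
proof -
  obtain m where "(of_int a :: real) / of_int k = of_int m" using assms(1) Ints_cases by blast
  then have "(of_int a :: real) = of_int (k * m)" using assms(2) by (simp add: field_simps)
  then show ?thesis by (metis dvd_triv_left of_int_eq_iff)
qed

lemma det_Ints:
  fixes A :: "real^'n^'n"
  assumes "\<And>i j. A $ i $ j \<in> \<int>"
  shows "det A \<in> \<int>"
  unfolding det_def by (auto intro!: Ints_sum Ints_mult Ints_prod assms simp: sign_def)

lemma unimodular_if_integral_inverse:
  fixes A B :: "real^'n^'n"
  assumes "\<And>i j. A $ i $ j \<in> \<int>" "\<And>i j. B $ i $ j \<in> \<int>" "A ** B = mat 1"
  shows "\<bar>det A\<bar> = 1"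
proof -
  obtain a b where "det A = of_int a" "det B = of_int b"
    using det_Ints[OF assms(1)] det_Ints[OF assms(2)] by (metis Ints_cases)
  moreover have "det A * det B = 1" using det_mul[of A B] assms(3) by simp
  ultimately have "a * b = 1" by (metis of_int_1 of_int_eq_iff of_int_mult)
  then show ?thesis using \<open>det A = of_int a\<close> zmult_eq_1_iff by auto
qed

lemma primitive_multiple_exists:
  fixes r :: "real^'n"
  assumes "r \<in> lattice_pts" "r \<noteq> 0"
  obtains \<mu> where "\<mu> > 0" "primitive_vec (\<mu> *\<^sub>R r)"
proof -
  obtain z where z: "\<And>i. r $ i = of_int (z i)" using lattice_pts_int_coords assms(1) by blast
  define g where "g = Gcd (range z)"
  obtain i0 where "r $ i0 \<noteq> 0" using assms(2) by (metis vec_eq_iff zero_index)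
  then have "g \<noteq> 0" using z Gcd_0_iff[of "range z"] by (auto simp: g_def)
  then have g: "g > 0" by (simp add: g_def order_le_neq_trans)
  have comp: "((1 / of_int g) *\<^sub>R r) $ i = of_int (z i div g)" for i
  proof -
    have "g dvd z i" unfolding g_def by (simp add: Gcd_dvd)
    then obtain q where "z i = g * q" by (rule dvdE)
    then show ?thesis using g by (simp add: z)
  qed
  have "primitive_vec ((1 / of_int g) *\<^sub>R r)"
    unfolding primitive_vec_def
  proof (intro conjI allI impI)
    show "(1 / of_int g) *\<^sub>R r \<in> lattice_pts" unfolding lattice_pts_def using comp by auto
    show "(1 / real_of_int g) *\<^sub>R r \<noteq> 0" using g assms(2) by simp
    fix k :: int
    assume k: "k \<noteq> 0 \<and> (\<forall>i. ((1 / of_int g) *\<^sub>R r) $ i / of_int k \<in> \<int>)"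
    have "(g * k) dvd z i" for i
    proof (rule dvd_if_Ints_divide)
      show "(of_int (z i) :: real) / of_int (g * k) \<in> \<int>" using k by (simp add: z)
      show "g * k \<noteq> 0" using k g by simp
    qed
    then have "(g * k) dvd Gcd (range z)" by (blast intro: Gcd_greatest)
    then have "(g * k) dvd g * 1" by (simp add: g_def)
    then have "k dvd 1" using g by (subst (asm) dvd_mult_cancel_left) auto
    then show "\<bar>k\<bar> = 1" by simp
  qed
  then show ?thesis using g by (intro that[of "1 / of_int g"]) auto
qed

text \<open>Write \<open>k = p / q\<close> in lowest terms: \<open>q\<close> divides every entry of \<open>r\<close>, and \<open>p\<close> every entry of
  \<open>k r\<close>.\<close>

lemma primitive_vec_scaleR_eq_1:
  fixes r :: "real^'n"
  assumes r: "primitive_vec r" and kr: "primitive_vec (k *\<^sub>R r)" and "k > 0"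
  shows "k = 1"
proof -
  from r have rl: "r \<in> lattice_pts" and "r \<noteq> 0" and
    r_prim: "\<And>k::int. k \<noteq> 0 \<Longrightarrow> (\<forall>i. r $ i / of_int k \<in> \<int>) \<Longrightarrow> \<bar>k\<bar> = 1"
    unfolding primitive_vec_def by blast+
  from kr have krl: "k *\<^sub>R r \<in> lattice_pts" and
    kr_prim: "\<And>k'::int. k' \<noteq> 0 \<Longrightarrow> (\<forall>i. (k *\<^sub>R r) $ i / of_int k' \<in> \<int>) \<Longrightarrow> \<bar>k'\<bar> = 1"
    unfolding primitive_vec_def by blast+
  obtain i0 where ri0: "r $ i0 \<noteq> 0" using \<open>r \<noteq> 0\<close> by (metis vec_eq_iff zero_index)
  have "k * r $ i0 \<in> \<rat>" "r $ i0 \<in> \<rat>"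
    using krl rl Ints_subset_Rats unfolding lattice_pts_def by auto
  then have "(k * r $ i0) / r $ i0 \<in> \<rat>" by (rule Rats_divide)
  then have "k \<in> \<rat>" using ri0 by simp
  then obtain p q :: nat where q0: "q \<noteq> 0" and "\<bar>k\<bar> = real p / real q" and cop: "coprime p q"
    by (rule Rats_abs_nat_div_natE)
  then have kpq: "k = real p / real q" using \<open>k > 0\<close> by simp
  obtain z where z: "\<And>i. r $ i = of_int (z i)" using lattice_pts_int_coords rl by blast
  have q_dvd: "int q dvd z i" for i
  proof -
    have "(k *\<^sub>R r) $ i \<in> \<int>" using krl by (simp add: lattice_pts_def)
    then have "int q dvd int p * z i" using q0 dvd_if_Ints_divide[of "int p * z i" "int q"] by (simp add: z kpq)
    moreover have "coprime (int q) (int p)" using cop by (simp add: coprime_commute)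
    ultimately show ?thesis using coprime_dvd_mult_right_iff by blast
  qed
  then have "\<forall>i. r $ i / of_int (int q) \<in> \<int>"
  proof (intro allI)
    fix i
    obtain m where "z i = int q * m" using q_dvd[of i] by (rule dvdE)
    then show "r $ i / of_int (int q) \<in> \<int>" using q0 by (simp add: z)
  qed
  then have "q = 1" using r_prim[of "int q"] q0 by simp
  then have kp: "k = real p" using kpq by simp
  then have "p \<noteq> 0" using \<open>k > 0\<close> by auto
  then have "\<forall>i. (k *\<^sub>R r) $ i / of_int (int p) \<in> \<int>" using rl kp by (simp add: lattice_pts_def)
  then have "\<bar>int p\<bar> = 1" using kr_prim[of "int p"] \<open>p \<noteq> 0\<close> by simp
  then show ?thesis using kp by simp
qed

lemma primitive_vec_if_inner_eq_1:
  fixes r u :: "real^'n"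
  assumes "r \<in> lattice_pts" "u \<in> lattice_pts" "r \<bullet> u = 1"
  shows "primitive_vec r"
  unfolding primitive_vec_def
proof (intro conjI allI impI)
  show "r \<in> lattice_pts" "r \<noteq> 0" using assms by auto
  fix k :: int
  assume k: "k \<noteq> 0 \<and> (\<forall>i. r $ i / of_int k \<in> \<int>)"
  then have "(1 / of_int k) *\<^sub>R r \<in> lattice_pts" by (simp add: lattice_pts_def)
  then have "((1 / of_int k) *\<^sub>R r) \<bullet> u \<in> \<int>" using assms(2) by (rule inner_lattice_pts_Ints)
  then have "k dvd 1" using k assms(3) dvd_if_Ints_divide[of 1 k] by simp
  then show "\<bar>k\<bar> = 1" by auto
qed

subsection \<open>Integral normals of lattice hyperplanes\<close>

lemma det_ne_0_if_rows_independent: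
  fixes M :: "real^'n^'n"
  assumes "independent (rows M)" and "inj (\<lambda>i. row i M)"
  shows "det M \<noteq> 0"
proof -
  have "card (rows M) = CARD('n)"
    using assms(2) by (simp add: rows_def full_SetCompr_eq card_image)
  then have "rank M = CARD('n)"
    using assms(1) by (simp add: row_rank_def dim_eq_card_independent)
  then show ?thesis by (simp add: det_eq_0_rank)
qed

text \<open>Cramer's rule: \<open>det M \<cdot> M\<^sup>-\<^sup>1 (1,\<dots>,1)\<close> has integral entries.\<close>

lemma integral_Cramer_solution:
  fixes M :: "real^'n^'n"
  assumes M: "\<And>i j. M $ i $ j \<in> \<int>" and "det M \<noteq> 0"
  obtains r where "r \<in> lattice_pts" "\<And>i. M $ i \<bullet> r = det M"
proof -
  obtain M' where "M ** M' = mat 1"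
    using assms(2) invertible_det_nz[of M] invertible_right_inverse[of M] by blast
  define one :: "real^'n" where "one = (\<chi> i. 1)"
  define x where "x = M' *v one"
  have Mx: "M *v x = one" by (simp add: x_def matrix_vector_mul_assoc \<open>M ** M' = mat 1\<close>)
  define r where "r = det M *\<^sub>R x"
  have "r $ k = det (\<chi> i j. if j = k then one $ i else M $ i $ j)" for k
    using cramer_lemma[of k M x] unfolding Mx by (simp add: r_def mult.commute)
  then have "r \<in> lattice_pts"
    unfolding lattice_pts_def by (auto intro!: det_Ints simp: one_def M)
  moreover have "M $ i \<bullet> r = det M" for i
  proof -
    have "(M *v r) $ i = det M" by (simp add: r_def Mx matrix_vector_mult_scaleR one_def)
    then show ?thesis by (simp add: matrix_vector_mult_def inner_vec_def)
  qed
  ultimately show ?thesis using that by blast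
qed

lemma lattice_hyperplane_normal_exists:
  fixes B :: "(real^'n) set"
  assumes B: "finite B" "B \<subseteq> lattice_pts" "\<not> affine_dependent B" "card B = CARD('n)"
    and w: "w \<in> lattice_pts" "w \<notin> affine hull B"
  obtains r c where "r \<in> lattice_pts" "r \<noteq> 0" "\<And>x. x \<in> affine hull B \<Longrightarrow> r \<bullet> x = c"
proof -
  obtain \<sigma> where \<sigma>: "bij_betw \<sigma> (UNIV::'n set) B"
    using finite_same_card_bij[of "UNIV::'n set" B] B by auto
  have \<sigma>B: "\<sigma> i \<in> B" for i using \<sigma> by (auto simp: bij_betw_def)
  define M :: "real^'n^'n" where "M = (\<chi> i. \<sigma> i - w)"
  have row_M: "row i M = \<sigma> i - w" for i by (simp add: M_def row_def vec_eq_iff)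
  have M_Ints: "M $ i $ j \<in> \<int>" for i j
    using lattice_pts_diff[OF subsetD[OF B(2) \<sigma>B] w(1)] by (simp add: M_def lattice_pts_def)
  have "w \<notin> B" using w(2) hull_inc by metis
  have "rows M = (\<lambda>x. - w + x) ` B"
    using \<sigma> by (auto simp: rows_def row_M bij_betw_def)
  moreover have "\<not> affine_dependent (insert w B)" using affine_independent_insert[OF B(3) w(2)] .
  ultimately have "independent (rows M)" using affine_dependent_iff_dependent[OF \<open>w \<notin> B\<close>] by simp
  moreover have "inj (\<lambda>i. row i M)" using \<sigma> by (simp add: row_M bij_betw_def inj_on_def)
  ultimately have detM: "det M \<noteq> 0" by (rule det_ne_0_if_rows_independent)
  obtain r where r: "r \<in> lattice_pts" "\<And>i. M $ i \<bullet> r = det M"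
    using integral_Cramer_solution[OF M_Ints detM] by blast
  have "r \<bullet> b = r \<bullet> w + det M" if "b \<in> B" for b
  proof -
    obtain i where "b = \<sigma> i" using \<sigma> \<open>b \<in> B\<close> by (auto simp: bij_betw_def)
    moreover have "(\<sigma> i - w) \<bullet> r = det M" using r(2)[of i] by (simp add: M_def)
    ultimately show ?thesis
      using inner_commute[of r "\<sigma> i"] inner_commute[of r w] inner_diff_left[of "\<sigma> i" w r] by simp
  qed
  then have "affine hull B \<subseteq> {x. r \<bullet> x = r \<bullet> w + det M}"
    by (intro hull_minimal) (auto simp: affine_hyperplane)
  moreover have "r \<noteq> 0" using r(2) detM by auto
  ultimately show ?thesis using that r(1) by blast
qed

lemma normal_of_hyperplane_proportional:
  fixes a r :: "'a::euclidean_space"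
  assumes "a \<noteq> 0" "affine hull F = {x. a \<bullet> x = b}" "F \<noteq> {}" "\<And>x. x \<in> F \<Longrightarrow> r \<bullet> x = c"
  obtains l where "r = l *\<^sub>R a"
proof -
  have hull_sub: "affine hull F \<subseteq> {x. r \<bullet> x = c}"
    using assms(4) by (intro hull_minimal) (auto simp: affine_hyperplane)
  obtain x0 where x0: "x0 \<in> F" using assms(3) by auto
  define w where "w = r - ((r \<bullet> a) / (a \<bullet> a)) *\<^sub>R a"
  have aw: "a \<bullet> w = 0"
    using assms(1) by (simp add: w_def inner_diff_right inner_commute)
  have "a \<bullet> x0 = b" using x0 assms(2) hull_inc[of x0 F] by auto
  then have "x0 + w \<in> affine hull F" using assms(2) aw by (simp add: inner_add_right)
  then have "r \<bullet> (x0 + w) = c" using hull_sub by auto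
  moreover have "r \<bullet> x0 = c" using assms(4) x0 by auto
  ultimately have "r \<bullet> w = 0" by (simp add: inner_add_right)
  then have "w \<bullet> w = 0" using aw by (simp add: w_def inner_diff_left inner_commute)
  then show ?thesis using that by (simp add: w_def)
qed

lemma facet_of_scaleR_image_iff:
  fixes P :: "(real^'n) set"
  assumes "c \<noteq> 0"
  shows "(\<lambda>x. c *\<^sub>R x) ` F facet_of (\<lambda>x. c *\<^sub>R x) ` P \<longleftrightarrow> F facet_of P"
proof -
  have lin: "linear (\<lambda>x::real^'n. c *\<^sub>R x)" and inj: "inj (\<lambda>x::real^'n. c *\<^sub>R x)"
    using assms by (auto simp: linear_scaleR inj_on_def)
  show ?thesis
    unfolding facet_of_def aff_dim_injective_linear_image[OF lin inj]
    using face_of_linear_image[OF lin inj, of F P] by simp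
qed

lemma facet_of_scaleR_image:
  fixes P :: "(real^'n) set"
  assumes "c \<noteq> 0"
  shows "G facet_of (\<lambda>x. c *\<^sub>R x) ` P \<longleftrightarrow> (\<exists>F. F facet_of P \<and> G = (\<lambda>x. c *\<^sub>R x) ` F)"
proof
  assume G: "G facet_of (\<lambda>x. c *\<^sub>R x) ` P"
  define F where "F = (\<lambda>x. (1/c) *\<^sub>R x) ` G"
  have "G = (\<lambda>x. c *\<^sub>R x) ` F" unfolding F_def image_comp using assms by (simp add: o_def)
  then show "\<exists>F. F facet_of P \<and> G = (\<lambda>x. c *\<^sub>R x) ` F"
    using G facet_of_scaleR_image_iff[OF assms, of F P] by auto
qed (use facet_of_scaleR_image_iff[OF assms] in blast)

lemma extreme_point_of_scaleR_image:
  fixes P :: "(real^'n) set"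
  assumes "c \<noteq> 0"
  shows "v extreme_point_of (\<lambda>x. c *\<^sub>R x) ` P \<longleftrightarrow> (\<exists>m. m extreme_point_of P \<and> v = c *\<^sub>R m)"
proof -
  have lin: "linear (\<lambda>x::real^'n. c *\<^sub>R x)" and inj: "inj (\<lambda>x::real^'n. c *\<^sub>R x)"
    using assms by (auto simp: linear_scaleR inj_on_def)
  have "(c *\<^sub>R m) extreme_point_of (\<lambda>x. c *\<^sub>R x) ` P \<longleftrightarrow> m extreme_point_of P" for m
    using face_of_linear_image[OF lin inj, of "{m}" P] by (simp add: face_of_singleton)
  moreover have "v = c *\<^sub>R ((1/c) *\<^sub>R v)" using assms by simp
  ultimately show ?thesis by metis
qed

lemma is_inner_normal_scaleR_image_iff:
  fixes P :: "(real^'n) set"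
  assumes "c > 0"
  shows "is_inner_normal ((\<lambda>x. c *\<^sub>R x) ` P) ((\<lambda>x. c *\<^sub>R x) ` F) r \<longleftrightarrow> is_inner_normal P F r"
proof
  assume "is_inner_normal ((\<lambda>x. c *\<^sub>R x) ` P) ((\<lambda>x. c *\<^sub>R x) ` F) r"
  then obtain d where "primitive_vec r" "\<forall>x\<in>F. r \<bullet> (c *\<^sub>R x) = d" "\<forall>x\<in>P. d \<le> r \<bullet> (c *\<^sub>R x)"
    unfolding is_inner_normal_def by auto
  moreover have "r \<bullet> (c *\<^sub>R x) = d \<longleftrightarrow> r \<bullet> x = d / c" "d \<le> r \<bullet> (c *\<^sub>R x) \<longleftrightarrow> d / c \<le> r \<bullet> x" for x
    using assms by (auto simp: field_simps)
  ultimately show "is_inner_normal P F r" unfolding is_inner_normal_def by blast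
next
  assume "is_inner_normal P F r"
  then obtain d where "primitive_vec r" "\<forall>x\<in>F. r \<bullet> x = d" "\<forall>x\<in>P. d \<le> r \<bullet> x"
    unfolding is_inner_normal_def by auto
  then show "is_inner_normal ((\<lambda>x. c *\<^sub>R x) ` P) ((\<lambda>x. c *\<^sub>R x) ` F) r"
    unfolding is_inner_normal_def using assms by (intro conjI exI[of _ "c * d"]) auto
qed

lemma facet_normal_scaleR_image:
  fixes P :: "(real^'n) set"
  assumes "c > 0"
  shows "facet_normal ((\<lambda>x. c *\<^sub>R x) ` P) ((\<lambda>x. c *\<^sub>R x) ` F) = facet_normal P F"
  unfolding facet_normal_def is_inner_normal_scaleR_image_iff[OF assms] ..

lemma std_simplex_eq: "std_simplex = convex hull (insert 0 (Basis :: (real^'n) set))"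
proof -
  have "{axis i 1 | i. True} = (Basis :: (real^'n) set)" by (auto simp: Basis_vec_def)
  then show ?thesis by (simp add: std_simplex_def)
qed

lemma mem_std_simplex_iff: "(y::real^'n) \<in> std_simplex \<longleftrightarrow> (\<forall>i. 0 \<le> y $ i) \<and> (\<Sum>i\<in>UNIV. y $ i) \<le> 1"
proof -
  have "(\<Sum>b\<in>(Basis::(real^'n) set). y \<bullet> b) = (\<Sum>i\<in>UNIV. y $ i)"
  proof -
    have "(Basis::(real^'n) set) = range (\<lambda>i. axis i 1)" by (auto simp: Basis_vec_def)
    moreover have "inj (\<lambda>i::'n. (axis i 1 :: real^'n))" by (auto simp: inj_on_def axis_eq_axis)
    ultimately show ?thesis using sum.reindex[of "\<lambda>i. axis i 1" UNIV "(\<bullet>) y"]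
      by (simp add: o_def inner_axis)
  qed
  then show ?thesis
    unfolding std_simplex_eq std_simplex by (auto simp: Basis_vec_def inner_axis)
qed

lemma lattice_pts_in_std_simplex:
  assumes y: "(y::real^'n) \<in> std_simplex" "y \<in> lattice_pts"
  shows "y \<in> insert 0 Basis"
proof (cases "y = 0")
  case False
  then obtain j where j: "y $ j \<noteq> 0" by (metis vec_eq_iff zero_index)
  have nonneg: "\<forall>i. 0 \<le> y $ i" and sum_le: "(\<Sum>i\<in>UNIV. y $ i) \<le> 1"
    using y(1) mem_std_simplex_iff by blast+
  have "y $ j \<in> \<int>" using y(2) by (simp add: lattice_pts_def)
  moreover have "y $ j > 0" using nonneg j by (metis less_eq_real_def)
  ultimately have "y $ j \<ge> 1" by (rule Ints_ge_1_if_pos)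
  moreover have "(\<Sum>i\<in>UNIV. y $ i) = y $ j + (\<Sum>i\<in>UNIV - {j}. y $ i)" by (simp add: sum.remove)
  moreover have "(\<Sum>i\<in>UNIV - {j}. y $ i) \<ge> 0" using nonneg by (simp add: sum_nonneg)
  ultimately have "y $ j = 1" "(\<Sum>i\<in>UNIV - {j}. y $ i) = 0" using sum_le by linarith+
  moreover have "\<forall>i\<in>UNIV - {j}. y $ i = 0"
    using calculation(2) nonneg sum_nonneg_eq_0_iff[of "UNIV - {j}" "\<lambda>i. y $ i"] by simp
  ultimately have "y = axis j 1" by (auto simp: vec_eq_iff axis_def)
  then show ?thesis by (auto simp: Basis_vec_def)
qed simp

lemma convex_hull_matrix_affine_image:
  fixes A :: "real^'n^'n"
  shows "(\<lambda>x. A *v x + t) ` (convex hull S) = convex hull ((\<lambda>x. A *v x + t) ` S)"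
proof -
  have "(\<lambda>x. A *v x + t) ` T = (\<lambda>x. t + x) ` ((*v) A ` T)" for T
    by (auto simp: image_iff add.commute)
  then show ?thesis
    by (simp add: convex_hull_linear_image convex_hull_translation)
qed

subsection \<open>Full-dimensional lattice polytopes and their facets\<close>

locale full_lattice_polytope =
  fixes P :: "(real^'n) set"
  assumes lattice_polytope: "lattice_polytope P" and full_dim: "aff_dim P = int CARD('n)"
begin

lemma polytope: "polytope P"
  using lattice_polytope by (auto simp: lattice_polytope_def polytope_def)

lemma compact: "compact P" using polytope polytope_imp_compact by blast
lemma convex: "convex P" using polytope polytope_imp_convex by blast
lemma polyhedron: "polyhedron P" using polytope polytope_imp_polyhedron by blast
lemma nonempty: "P \<noteq> {}" using full_dim by auto

lemma finite_facets: "finite {F. F facet_of P}"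
  using finite_polyhedron_facets[OF polyhedron] .

lemma extreme_point_exists: obtains m where "m extreme_point_of P"
  using extreme_point_exists_convex[OF compact convex nonempty] by blast

lemma extreme_points_finite_lattice:
  shows "finite {v. v extreme_point_of P}" and "{v. v extreme_point_of P} \<subseteq> lattice_pts"
proof -
  obtain V where "finite V" "V \<subseteq> lattice_pts" "P = convex hull V"
    using lattice_polytope by (auto simp: lattice_polytope_def)
  then have "{v. v extreme_point_of P} \<subseteq> V" using extreme_point_of_convex_hull by blast
  then show "finite {v. v extreme_point_of P}" "{v. v extreme_point_of P} \<subseteq> lattice_pts"
    using \<open>finite V\<close> \<open>V \<subseteq> lattice_pts\<close> finite_subset by blast+
qed

lemma extreme_point_in_lattice_pts: "v extreme_point_of P \<Longrightarrow> v \<in> lattice_pts"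
  using extreme_points_finite_lattice by blast

lemma facet_aff_dim: "F facet_of P \<Longrightarrow> aff_dim F = int CARD('n) - 1"
  using full_dim by (simp add: facet_of_def)

lemma affine_hull_facet:
  assumes F: "F facet_of P" and a: "a \<noteq> 0" and F_eq: "F = P \<inter> {x. a \<bullet> x = b}"
  shows "affine hull F = {x. a \<bullet> x = b}"
proof (rule affine_dim_equal)
  show "affine (affine hull F)" "affine {x. a \<bullet> x = b}" by (simp_all add: affine_hyperplane)
  show "affine hull F \<noteq> {}" using F by (simp add: facet_of_def)
  show "affine hull F \<subseteq> {x. a \<bullet> x = b}"
    using F_eq by (intro hull_minimal) (auto simp: affine_hyperplane)
  show "aff_dim (affine hull F) = aff_dim {x. a \<bullet> x = b}"
    using facet_aff_dim[OF F] a by simp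
qed

text \<open>The affine hull of a facet is spanned by \<open>n\<close> of its vertices, and some vertex of \<open>P\<close> lies
  off it; all of these are lattice points.\<close>

lemma facet_lattice_normal_exists:
  assumes F: "F facet_of P"
  obtains r c where "r \<in> lattice_pts" "r \<noteq> 0" "\<And>x. x \<in> F \<Longrightarrow> r \<bullet> x = c"
proof -
  have "F face_of P" using F facet_of_imp_face_of by blast
  define E where "E = {x. x extreme_point_of F}"
  have E: "E \<subseteq> {v. v extreme_point_of P}"
    using extreme_point_of_face[OF \<open>F face_of P\<close>] by (auto simp: E_def)
  have "F = convex hull E"
    unfolding E_def using Krein_Milman_Minkowski face_of_imp_compact[OF convex compact \<open>F face_of P\<close>]
      face_of_imp_convex[OF \<open>F face_of P\<close>] by blast
  obtain B where "B \<subseteq> E" and B_indep: "\<not> affine_dependent B" and "affine hull E = affine hull B"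
    using affine_basis_exists[of E] by blast
  then have hull_FB: "affine hull F = affine hull B" using \<open>F = convex hull E\<close> by simp
  have B_lattice: "finite B" "B \<subseteq> lattice_pts"
    using \<open>B \<subseteq> E\<close> E extreme_points_finite_lattice by (auto intro: finite_subset)
  have "aff_dim B = int CARD('n) - 1"
    using facet_aff_dim[OF F] aff_dim_affine_hull[of F] aff_dim_affine_hull[of B] hull_FB by simp
  then have card_B: "card B = CARD('n)" using aff_dim_affine_independent[OF B_indep] by linarith
  obtain w where w: "w extreme_point_of P" "w \<notin> affine hull F"
  proof (rule ccontr)
    assume "\<not> thesis"
    then have "{v. v extreme_point_of P} \<subseteq> affine hull F" using that by blast
    then have "P \<subseteq> affine hull F"
      using Krein_Milman_Minkowski[OF compact convex] convex_hull_subset_affine_hull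
      by (metis (no_types, lifting) hull_minimal affine_affine_hull subset_trans)
    then have "aff_dim P \<le> aff_dim (affine hull F)" by (rule aff_dim_subset)
    then show False using full_dim facet_aff_dim[OF F] by simp
  qed
  obtain r c where "r \<in> lattice_pts" "r \<noteq> 0" "\<And>x. x \<in> affine hull B \<Longrightarrow> r \<bullet> x = c"
    using lattice_hyperplane_normal_exists[OF B_lattice B_indep card_B
        extreme_point_in_lattice_pts[OF w(1)]] w(2) hull_FB by metis
  then show ?thesis using that hull_FB hull_inc by metis
qed

lemma inner_normal_neg_multiple:
  assumes F: "F facet_of P" and a: "a \<noteq> 0" and P_le: "P \<subseteq> {x. a \<bullet> x \<le> b}"
    and F_eq: "F = P \<inter> {x. a \<bullet> x = b}"
    and r: "r \<noteq> 0" "\<And>x. x \<in> F \<Longrightarrow> r \<bullet> x = c" "\<And>x. x \<in> P \<Longrightarrow> c \<le> r \<bullet> x"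
  obtains \<mu> where "\<mu> > 0" "r = (-\<mu>) *\<^sub>R a" "c = -\<mu> * b"
proof -
  have "F \<noteq> {}" using F by (simp add: facet_of_def)
  obtain l where rl: "r = l *\<^sub>R a"
    using normal_of_hyperplane_proportional[OF a affine_hull_facet[OF F a F_eq] \<open>F \<noteq> {}\<close> r(2)] .
  obtain x0 where "x0 \<in> F" using \<open>F \<noteq> {}\<close> by blast
  then have c: "c = l * b" using r(2) F_eq rl by auto
  obtain p where "p \<in> P" "a \<bullet> p \<noteq> b"
  proof (rule ccontr)
    assume "\<not> thesis"
    then have "P \<subseteq> {x. a \<bullet> x = b}" using that by blast
    then have "aff_dim P \<le> aff_dim {x. a \<bullet> x = b}" by (rule aff_dim_subset)
    then show False using a full_dim by simp
  qed
  then have "a \<bullet> p < b" using P_le by force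
  moreover have "l * b \<le> l * (a \<bullet> p)" using r(3)[OF \<open>p \<in> P\<close>] c rl by simp
  ultimately have "l < 0" using r(1) rl by (cases "l < 0") (auto simp: not_less mult_le_cancel_left)
  then show ?thesis using rl c by (intro that[of "-l"]) auto
qed

lemma ex1_inner_normal:
  assumes F: "F facet_of P"
  shows "\<exists>!r. is_inner_normal P F r"
proof -
  obtain a b where a: "a \<noteq> 0" and P_le: "P \<subseteq> {x. a \<bullet> x \<le> b}" and F_eq: "F = P \<inter> {x. a \<bullet> x = b}"
    using facet_of_polyhedron[OF polyhedron F] by blast
  have neg_multiple: "\<exists>\<mu>>0. r = (-\<mu>) *\<^sub>R a" if r: "is_inner_normal P F r" for r
  proof -
    obtain c where prim: "primitive_vec r" and "\<forall>x\<in>F. r \<bullet> x = c" "\<forall>x\<in>P. c \<le> r \<bullet> x"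
      using r by (auto simp: is_inner_normal_def)
    moreover have "r \<noteq> 0" using prim by (simp add: primitive_vec_def)
    ultimately show ?thesis using inner_normal_neg_multiple[OF F a P_le F_eq, of r c] by metis
  qed
  obtain r0 c0 where r0: "r0 \<in> lattice_pts" "r0 \<noteq> 0" "\<And>x. x \<in> F \<Longrightarrow> r0 \<bullet> x = c0"
    using facet_lattice_normal_exists[OF F] by blast
  have "F \<noteq> {}" using F by (simp add: facet_of_def)
  obtain l where "r0 = l *\<^sub>R a"
    using normal_of_hyperplane_proportional[OF a affine_hull_facet[OF F a F_eq] \<open>F \<noteq> {}\<close> r0(3)] .
  define r1 where "r1 = (if l < 0 then r0 else - r0)"
  have r1: "r1 \<in> lattice_pts" "r1 \<noteq> 0" "r1 = (- \<bar>l\<bar>) *\<^sub>R a"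
    using r0 \<open>r0 = l *\<^sub>R a\<close> by (auto simp: r1_def lattice_pts_uminus)
  obtain \<mu> where "\<mu> > 0" and prim: "primitive_vec (\<mu> *\<^sub>R r1)"
    using primitive_multiple_exists[OF r1(1,2)] by blast
  have "\<kappa> * (a \<bullet> x) \<le> \<kappa> * b" if "\<kappa> \<ge> 0" "x \<in> P" for \<kappa> x
    using that P_le by (auto intro: mult_left_mono)
  then have "is_inner_normal P F (\<mu> *\<^sub>R r1)"
    unfolding is_inner_normal_def using prim \<open>\<mu> > 0\<close> F_eq
    by (intro conjI exI[of _ "-(\<mu> * \<bar>l\<bar>) * b"]) (auto simp: r1(3))
  moreover have "r = r'" if r: "is_inner_normal P F r" "is_inner_normal P F r'" for r r'
  proof -
    obtain \<mu> \<mu>' where "\<mu> > 0" "r = (-\<mu>) *\<^sub>R a" "\<mu>' > 0" "r' = (-\<mu>') *\<^sub>R a"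
      using neg_multiple[OF r(1)] neg_multiple[OF r(2)] by blast
    then have "r' = (\<mu>' / \<mu>) *\<^sub>R r" "\<mu>' / \<mu> > 0" by simp_all
    then show ?thesis
      using primitive_vec_scaleR_eq_1 r unfolding is_inner_normal_def by (metis scaleR_one)
  qed
  ultimately show ?thesis by blast
qed

lemma facet_normal_supporting:
  assumes F: "F facet_of P"
  shows "primitive_vec (facet_normal P F)"
    and "\<And>x. x \<in> F \<Longrightarrow> facet_normal P F \<bullet> x = facet_offset P F"
    and "\<And>x. x \<in> P \<Longrightarrow> facet_offset P F \<le> facet_normal P F \<bullet> x"
proof -
  have "is_inner_normal P F (facet_normal P F)"
    unfolding facet_normal_def using ex1_inner_normal[OF F] by (rule theI')
  then obtain c where prim: "primitive_vec (facet_normal P F)"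
    and onF: "\<forall>x\<in>F. facet_normal P F \<bullet> x = c" and onP: "\<forall>x\<in>P. c \<le> facet_normal P F \<bullet> x"
    unfolding is_inner_normal_def by blast
  obtain x0 where "x0 \<in> F" using F by (auto simp: facet_of_def)
  then have "x0 \<in> P" using F facet_of_imp_subset by blast
  have "facet_offset P F = c"
    unfolding facet_offset_def
    using onF onP \<open>x0 \<in> F\<close> \<open>x0 \<in> P\<close> by (intro cInf_eq_minimum) force+
  then show "primitive_vec (facet_normal P F)"
    "\<And>x. x \<in> F \<Longrightarrow> facet_normal P F \<bullet> x = facet_offset P F"
    "\<And>x. x \<in> P \<Longrightarrow> facet_offset P F \<le> facet_normal P F \<bullet> x"
    using prim onF onP by auto
qed

lemma facet_normal_offset_eq:
  assumes F: "F facet_of P" and a: "a \<noteq> 0" and P_le: "P \<subseteq> {x. a \<bullet> x \<le> b}"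
    and F_eq: "F = P \<inter> {x. a \<bullet> x = b}"
  obtains \<mu> where "\<mu> > 0" "facet_normal P F = (-\<mu>) *\<^sub>R a" "facet_offset P F = -\<mu> * b"
proof (rule inner_normal_neg_multiple[OF F a P_le F_eq])
  show "facet_normal P F \<noteq> 0"
    using facet_normal_supporting(1)[OF F] by (simp add: primitive_vec_def)
qed (use facet_normal_supporting[OF F] that in auto)

lemma facet_normal_in_lattice_pts: "F facet_of P \<Longrightarrow> facet_normal P F \<in> lattice_pts"
  using facet_normal_supporting(1) by (simp add: primitive_vec_def)

lemma facet_eq:
  assumes F: "F facet_of P"
  shows "F = {x \<in> P. facet_normal P F \<bullet> x = facet_offset P F}"
proof -
  obtain a b where a: "a \<noteq> 0" and P_le: "P \<subseteq> {x. a \<bullet> x \<le> b}" and F_eq: "F = P \<inter> {x. a \<bullet> x = b}"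
    using facet_of_polyhedron[OF polyhedron F] by blast
  obtain \<mu> where "\<mu> > 0" "facet_normal P F = (-\<mu>) *\<^sub>R a" "facet_offset P F = -\<mu> * b"
    using facet_normal_offset_eq[OF F a P_le F_eq] .
  then show ?thesis using F_eq by auto
qed

lemma facet_offset_Ints:
  assumes F: "F facet_of P"
  shows "facet_offset P F \<in> \<int>"
proof -
  have "compact F" "convex F" "F \<noteq> {}"
    using F face_of_imp_compact[OF convex compact] face_of_imp_convex
    by (auto simp: facet_of_def)
  then obtain v where "v extreme_point_of F" using extreme_point_exists_convex by blast
  then have "v \<in> F" "v extreme_point_of P"
    using extreme_point_of_face[of F P v] F facet_of_imp_face_of extreme_point_of_def by blast+
  then show ?thesis
    using facet_normal_supporting(2)[OF F] inner_lattice_pts_Ints[OF facet_normal_in_lattice_pts[OF F]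
        extreme_point_in_lattice_pts] by metis
qed

lemma mem_iff_facet_inequalities:
  "x \<in> P \<longleftrightarrow> (\<forall>F. F facet_of P \<longrightarrow> facet_offset P F \<le> facet_normal P F \<bullet> x)"
proof
  assume x: "\<forall>F. F facet_of P \<longrightarrow> facet_offset P F \<le> facet_normal P F \<bullet> x"
  obtain H where finH: "finite H" and P_eq: "P = affine hull P \<inter> \<Inter>H"
    and min: "\<And>H'. H' \<subset> H \<Longrightarrow> P \<subset> (affine hull P) \<inter> \<Inter>H'"
    and "\<And>h. h \<in> H \<Longrightarrow> \<exists>a b. a \<noteq> 0 \<and> h = {x. a \<bullet> x \<le> b}"
    using polyhedron by (simp add: polyhedron_Int_affine_minimal) meson
  then obtain a b where ab: "\<And>h. h \<in> H \<Longrightarrow> a h \<noteq> 0 \<and> h = {x. a h \<bullet> x \<le> b h}"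
    by metis
  have "x \<in> h" if h: "h \<in> H" for h
  proof -
    define F where "F = P \<inter> {x. a h \<bullet> x = b h}"
    have F: "F facet_of P"
      using facet_of_polyhedron_explicit[OF finH P_eq ab min] h F_def by blast
    have "P \<subseteq> {x. a h \<bullet> x \<le> b h}" using P_eq h ab by blast
    then obtain \<mu> where "\<mu> > 0" "facet_normal P F = (-\<mu>) *\<^sub>R a h" "facet_offset P F = -\<mu> * b h"
      using facet_normal_offset_eq[OF F _ _ F_def] ab[OF h] by blast
    moreover have "facet_offset P F \<le> facet_normal P F \<bullet> x" using x F by blast
    ultimately have "a h \<bullet> x \<le> b h" by simp
    then show "x \<in> h" using ab[OF h] by blast
  qed
  moreover have "affine hull P = UNIV" using full_dim aff_dim_eq_full[of P] by simp
  ultimately show "x \<in> P" using P_eq by blast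
qed (use facet_normal_supporting(3) in blast)

lemma facet_offset_scaleR_image:
  assumes F: "F facet_of P" and c: "c > 0"
  shows "facet_offset ((\<lambda>x. c *\<^sub>R x) ` P) ((\<lambda>x. c *\<^sub>R x) ` F) = c * facet_offset P F"
  unfolding facet_offset_def facet_normal_scaleR_image[OF c]
proof (rule cInf_eq_minimum)
  obtain x0 where "x0 \<in> F" using F by (auto simp: facet_of_def)
  then have "x0 \<in> P" "facet_normal P F \<bullet> (c *\<^sub>R x0) = c * facet_offset P F"
    using F facet_of_imp_subset facet_normal_supporting(2)[OF F] by auto
  then show "c * Inf ((\<bullet>) (facet_normal P F) ` P) \<in> (\<bullet>) (facet_normal P F) ` (\<lambda>x. c *\<^sub>R x) ` P"
    by (metis facet_offset_def image_eqI)
  show "c * Inf ((\<bullet>) (facet_normal P F) ` P) \<le> y"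
    if "y \<in> (\<bullet>) (facet_normal P F) ` (\<lambda>x. c *\<^sub>R x) ` P" for y
    using that facet_normal_supporting(3)[OF F] c by (auto simp: facet_offset_def)
qed

lemma mem_shrink_scaleR_image_iff:
  assumes c: "c > 0"
  shows "x \<in> shrink ((\<lambda>x. c *\<^sub>R x) ` P) s \<longleftrightarrow>
         (\<forall>F. F facet_of P \<longrightarrow> c * facet_offset P F + s \<le> facet_normal P F \<bullet> x)"
proof -
  have c0: "c \<noteq> 0" using c by simp
  have "x \<in> shrink ((\<lambda>x. c *\<^sub>R x) ` P) s \<longleftrightarrow> (\<forall>F. F facet_of P \<longrightarrow>
      facet_offset ((\<lambda>x. c *\<^sub>R x) ` P) ((\<lambda>x. c *\<^sub>R x) ` F) + s
        \<le> facet_normal ((\<lambda>x. c *\<^sub>R x) ` P) ((\<lambda>x. c *\<^sub>R x) ` F) \<bullet> x)"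
    unfolding shrink_def mem_Collect_eq facet_of_scaleR_image[OF c0] by blast
  also have "\<dots> \<longleftrightarrow> (\<forall>F. F facet_of P \<longrightarrow> c * facet_offset P F + s \<le> facet_normal P F \<bullet> x)"
    by (simp add: facet_normal_scaleR_image[OF c] facet_offset_scaleR_image[OF _ c] cong: imp_cong)
  finally show ?thesis .
qed

lemma s_spanned_scaleR_image_iff:
  assumes c: "c > 0"
  shows "s_spanned ((\<lambda>x. c *\<^sub>R x) ` P) s \<longleftrightarrow>
    (\<forall>m. m extreme_point_of P \<longrightarrow> (\<forall>x. (\<forall>F. F facet_of P \<and> m \<in> F \<longrightarrow>
        facet_normal P F \<bullet> x = c * facet_offset P F + s) \<longrightarrow> x \<in> shrink ((\<lambda>x. c *\<^sub>R x) ` P) s))"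
proof -
  have c0: "c \<noteq> 0" using c by simp
  have facet_conditions: "(\<forall>G. G facet_of (\<lambda>x. c *\<^sub>R x) ` P \<and> c *\<^sub>R m \<in> G \<longrightarrow>
      facet_normal ((\<lambda>x. c *\<^sub>R x) ` P) G \<bullet> x = facet_offset ((\<lambda>x. c *\<^sub>R x) ` P) G + s) \<longleftrightarrow>
    (\<forall>F. F facet_of P \<and> m \<in> F \<longrightarrow> facet_normal P F \<bullet> x = c * facet_offset P F + s)" for m x
  proof -
    have "c *\<^sub>R m \<in> (\<lambda>x. c *\<^sub>R x) ` F \<longleftrightarrow> m \<in> F" for F using c0 by auto
    then have "(\<forall>G. G facet_of (\<lambda>x. c *\<^sub>R x) ` P \<and> c *\<^sub>R m \<in> G \<longrightarrow> \<phi> G) \<longleftrightarrow>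
        (\<forall>F. F facet_of P \<and> m \<in> F \<longrightarrow> \<phi> ((\<lambda>x. c *\<^sub>R x) ` F))" for \<phi>
      unfolding facet_of_scaleR_image[OF c0] by blast
    then show ?thesis
      by (simp add: facet_normal_scaleR_image[OF c] facet_offset_scaleR_image[OF _ c] cong: imp_cong)
  qed
  show ?thesis
    unfolding s_spanned_def extreme_point_of_scaleR_image[OF c0] by (auto simp: facet_conditions)
qed

end

subsection \<open>The dual basis at a vertex of a smooth polytope\<close>

locale smooth_lattice_polytope = full_lattice_polytope P for P :: "(real^'n) set" +
  assumes smooth: "smooth_polytope P"
begin

abbreviation \<rho> :: "(real^'n) set \<Rightarrow> real^'n" where "\<rho> F \<equiv> facet_normal P F"
abbreviation off :: "(real^'n) set \<Rightarrow> real" where "off F \<equiv> facet_offset P F"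

definition facets_at :: "real^'n \<Rightarrow> (real^'n) set set" where
  "facets_at m = {F. F facet_of P \<and> m \<in> F}"

definition facet_index :: "real^'n \<Rightarrow> 'n \<Rightarrow> (real^'n) set" where
  "facet_index m = (SOME \<sigma>. bij_betw \<sigma> UNIV (facets_at m))"

definition normal_coeff :: "real^'n \<Rightarrow> real^'n \<Rightarrow> (real^'n) set \<Rightarrow> int" where
  "normal_coeff m z = (THE c. (\<forall>F. F \<notin> facets_at m \<longrightarrow> c F = 0) \<and>
     z = (\<Sum>F\<in>facets_at m. of_int (c F) *\<^sub>R \<rho> F))"

text \<open>Coordinate \<open>i\<close> of \<open>edge_vec m F\<close> is the coefficient of \<open>\<rho> F\<close> in the unit vector \<open>e\<^sub>i\<close>;
  these vectors form the dual basis of the normals at \<open>m\<close>, and \<open>m + edge_vec m F\<close> are the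
  lattice points next to \<open>m\<close> on the edges of \<open>P\<close>.\<close>

definition edge_vec :: "real^'n \<Rightarrow> (real^'n) set \<Rightarrow> real^'n" where
  "edge_vec m F = (\<chi> i. of_int (normal_coeff m (axis i 1) F))"

definition normal_matrix :: "real^'n \<Rightarrow> real^'n^'n" where
  "normal_matrix m = (\<chi> i. \<rho> (facet_index m i))"

definition edge_matrix :: "real^'n \<Rightarrow> real^'n^'n" where
  "edge_matrix m = (\<chi> i j. edge_vec m (facet_index m j) $ i)"

definition edge_simplex :: "real^'n \<Rightarrow> (real^'n) set" where
  "edge_simplex m = convex hull (insert m ((\<lambda>F. m + edge_vec m F) ` facets_at m))"

lemma finite_facets_at: "finite (facets_at m)"
  using finite_facets by (rule finite_subset[rotated]) (auto simp: facets_at_def)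

lemma facet_of_if_facets_at: "F \<in> facets_at m \<Longrightarrow> F facet_of P"
  by (simp add: facets_at_def)

lemma edge_vec_in_lattice_pts: "edge_vec m F \<in> lattice_pts"
  by (simp add: edge_vec_def lattice_pts_def)

lemma normal_matrix_mult: "(normal_matrix m *v x) $ i = \<rho> (facet_index m i) \<bullet> x"
  by (simp add: matrix_vector_mult_def inner_vec_def normal_matrix_def)

context
  fixes m assumes m: "m extreme_point_of P"
begin

lemma vertex_in_P: "m \<in> P"
  using m extreme_point_of_def by blast

lemma inner_facet_normal_vertex: "F \<in> facets_at m \<Longrightarrow> \<rho> F \<bullet> m = off F"
  using facet_normal_supporting(2) by (auto simp: facets_at_def)

lemma facets_at_basis:
  "card (facets_at m) = CARD('n)"
  "z \<in> lattice_pts \<Longrightarrow> \<exists>!c::(real^'n) set \<Rightarrow> int. (\<forall>F. F \<notin> facets_at m \<longrightarrow> c F = 0) \<and>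
     z = (\<Sum>F\<in>facets_at m. of_int (c F) *\<^sub>R \<rho> F)"
proof -
  have "let S = {F. F facet_of P \<and> m \<in> F} in card S = CARD('n) \<and>
        (\<forall>z\<in>lattice_pts. \<exists>!c::(real^'n) set \<Rightarrow> int.
            (\<forall>F. F \<notin> S \<longrightarrow> c F = 0) \<and> z = (\<Sum>F\<in>S. of_int (c F) *\<^sub>R facet_normal P F))"
    using smooth m unfolding smooth_polytope_def by (elim allE impE)
  then show "card (facets_at m) = CARD('n)"
    "z \<in> lattice_pts \<Longrightarrow> \<exists>!c::(real^'n) set \<Rightarrow> int. (\<forall>F. F \<notin> facets_at m \<longrightarrow> c F = 0) \<and>
       z = (\<Sum>F\<in>facets_at m. of_int (c F) *\<^sub>R \<rho> F)"
    unfolding Let_def facets_at_def by blast+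
qed

lemma bij_facet_index: "bij_betw (facet_index m) UNIV (facets_at m)"
proof -
  have "\<exists>\<sigma>. bij_betw \<sigma> (UNIV::'n set) (facets_at m)"
    using finite_same_card_bij[of "UNIV::'n set" "facets_at m"] finite_facets_at facets_at_basis(1)
    by simp
  then show ?thesis unfolding facet_index_def by (rule someI_ex)
qed

lemma facet_index_in_facets_at: "facet_index m i \<in> facets_at m"
  using bij_facet_index by (auto simp: bij_betw_def)

lemma facet_index_eq_iff: "facet_index m i = facet_index m j \<longleftrightarrow> i = j"
  using bij_facet_index by (auto simp: bij_betw_def inj_on_def)

lemma sum_facets_at_reindex: "(\<Sum>F\<in>facets_at m. f F) = (\<Sum>i\<in>UNIV. f (facet_index m i))"
  using sum.reindex_bij_betw[OF bij_facet_index, of f] by simp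

lemma axis_eq_sum_normal_coeff:
  "axis i 1 = (\<Sum>F\<in>facets_at m. of_int (normal_coeff m (axis i 1) F) *\<^sub>R \<rho> F)"
  using theI'[OF facets_at_basis(2)[OF axis_in_lattice_pts]] unfolding normal_coeff_def by blast

text \<open>\<open>edge_matrix m\<close> is a left inverse of \<open>normal_matrix m\<close> by the choice of the coefficients,
  hence also a right inverse.\<close>

lemma normal_matrix_edge_matrix: "normal_matrix m ** edge_matrix m = mat 1"
proof -
  have "(edge_matrix m ** normal_matrix m) $ i $ k = (axis i 1 :: real^'n) $ k" for i k
  proof -
    have "(edge_matrix m ** normal_matrix m) $ i $ k
        = (\<Sum>F\<in>facets_at m. of_int (normal_coeff m (axis i 1) F) *\<^sub>R \<rho> F) $ k"
      by (simp add: matrix_matrix_mult_def edge_matrix_def normal_matrix_def edge_vec_def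
          sum_component sum_facets_at_reindex)
    then show ?thesis using axis_eq_sum_normal_coeff by simp
  qed
  then have "edge_matrix m ** normal_matrix m = mat 1"
    by (simp add: vec_eq_iff mat_def axis_def)
  then show ?thesis by (simp add: matrix_left_right_inverse)
qed

lemma inner_facet_normal_edge_vec:
  assumes "G \<in> facets_at m" "F \<in> facets_at m"
  shows "\<rho> G \<bullet> edge_vec m F = (if G = F then 1 else 0)"
proof -
  obtain i j where "G = facet_index m i" "F = facet_index m j"
    using assms bij_facet_index by (metis bij_betw_def imageE)
  moreover have "(normal_matrix m ** edge_matrix m) $ i $ j = \<rho> G \<bullet> edge_vec m F"
    using calculation by (simp add: matrix_matrix_mult_def normal_matrix_def edge_matrix_def inner_vec_def)
  moreover have "facet_index m i = facet_index m j \<longleftrightarrow> i = j"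
    using bij_facet_index by (auto simp: bij_betw_def inj_on_def)
  ultimately show ?thesis using normal_matrix_edge_matrix by (simp add: mat_def)
qed

lemma sum_inner_facet_normal_edge_vec:
  assumes G: "G \<in> facets_at m"
  shows "(\<Sum>F\<in>facets_at m. \<rho> G \<bullet> edge_vec m F) = 1" "(\<Sum>F\<in>facets_at m. \<rho> F) \<bullet> edge_vec m G = 1"
proof -
  have "(\<Sum>F\<in>facets_at m. \<rho> G \<bullet> edge_vec m F) = (\<Sum>F\<in>facets_at m. if G = F then 1 else 0)"
    using inner_facet_normal_edge_vec[OF G] by (intro sum.cong) auto
  then show "(\<Sum>F\<in>facets_at m. \<rho> G \<bullet> edge_vec m F) = 1" using G finite_facets_at[of m] by simp
  have "(\<Sum>F\<in>facets_at m. \<rho> F) \<bullet> edge_vec m G = (\<Sum>F\<in>facets_at m. if F = G then 1 else 0)"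
    unfolding inner_sum_left using inner_facet_normal_edge_vec[OF _ G] by (intro sum.cong) auto
  then show "(\<Sum>F\<in>facets_at m. \<rho> F) \<bullet> edge_vec m G = 1" using G finite_facets_at[of m] by simp
qed

lemma expansion_in_edge_vecs: "w = (\<Sum>F\<in>facets_at m. (\<rho> F \<bullet> w) *\<^sub>R edge_vec m F)"
proof -
  have "w $ i = (\<Sum>F\<in>facets_at m. (\<rho> F \<bullet> w) * of_int (normal_coeff m (axis i 1) F))" for i
  proof -
    have "w $ i = axis i 1 \<bullet> w" by (simp add: inner_axis')
    also have "\<dots> = (\<Sum>F\<in>facets_at m. of_int (normal_coeff m (axis i 1) F) * (\<rho> F \<bullet> w))"
      by (subst axis_eq_sum_normal_coeff) (simp add: inner_sum_left)
    finally show ?thesis by (simp add: mult.commute)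
  qed
  then show ?thesis by (simp add: vec_eq_iff sum_component edge_vec_def)
qed

lemma expansion_in_facet_normals: "v = (\<Sum>F\<in>facets_at m. (v \<bullet> edge_vec m F) *\<^sub>R \<rho> F)"
proof -
  define D where "D = v - (\<Sum>F\<in>facets_at m. (v \<bullet> edge_vec m F) *\<^sub>R \<rho> F)"
  have D_edge: "D \<bullet> edge_vec m G = 0" if G: "G \<in> facets_at m" for G
  proof -
    have "(\<Sum>F\<in>facets_at m. (v \<bullet> edge_vec m F) *\<^sub>R \<rho> F) \<bullet> edge_vec m G
        = (\<Sum>F\<in>facets_at m. if F = G then v \<bullet> edge_vec m F else 0)"
      unfolding inner_sum_left using inner_facet_normal_edge_vec[OF _ G] by (intro sum.cong) auto
    also have "\<dots> = v \<bullet> edge_vec m G" using G finite_facets_at[of m] by simp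
    finally show ?thesis by (simp add: D_def inner_diff_left)
  qed
  have "D \<bullet> D = (\<Sum>F\<in>facets_at m. (\<rho> F \<bullet> D) * (edge_vec m F \<bullet> D))"
    by (subst (1) expansion_in_edge_vecs[of D]) (simp add: inner_sum_left)
  also have "\<dots> = 0" using D_edge by (simp add: inner_commute)
  finally have "D \<bullet> D = 0" .
  then show ?thesis by (simp add: D_def)
qed

lemma lattice_distance_to_facet:
  assumes G: "G facet_of P" "m \<notin> G"
  shows "\<rho> G \<bullet> m - off G \<in> \<int>" "\<rho> G \<bullet> m - off G \<ge> 1"
proof -
  show int: "\<rho> G \<bullet> m - off G \<in> \<int>"
    using inner_lattice_pts_Ints[OF facet_normal_in_lattice_pts[OF G(1)] extreme_point_in_lattice_pts[OF m]]
      facet_offset_Ints[OF G(1)] by (rule Ints_diff)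
  have "\<rho> G \<bullet> m \<noteq> off G" using G facet_eq[OF G(1)] vertex_in_P by blast
  then have "\<rho> G \<bullet> m - off G > 0" using facet_normal_supporting(3)[OF G(1) vertex_in_P] by simp
  then show "\<rho> G \<bullet> m - off G \<ge> 1" by (rule Ints_ge_1_if_pos[OF int])
qed

lemma vertex_plus_small_edge_vec_in_P:
  assumes F: "F \<in> facets_at m"
  obtains t where "t > 0" "m + t *\<^sub>R edge_vec m F \<in> P"
proof -
  define u where "u = edge_vec m F"
  define K where "K = 1 + (\<Sum>G\<in>{G. G facet_of P}. \<bar>\<rho> G \<bullet> u\<bar>)"
  have K: "\<bar>\<rho> G \<bullet> u\<bar> \<le> K - 1" if "G facet_of P" for G
    unfolding K_def using member_le_sum[of G "{G. G facet_of P}" "\<lambda>G. \<bar>\<rho> G \<bullet> u\<bar>"] finite_facets that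
    by simp
  have "K \<ge> 1" unfolding K_def by (simp add: sum_nonneg)
  define t where "t = 1 / K"
  have t: "t > 0" using \<open>K \<ge> 1\<close> by (simp add: t_def)
  have "m + t *\<^sub>R u \<in> P"
    unfolding mem_iff_facet_inequalities
  proof (intro allI impI)
    fix G assume G: "G facet_of P"
    show "off G \<le> \<rho> G \<bullet> (m + t *\<^sub>R u)"
    proof (cases "m \<in> G")
      case True
      then have "G \<in> facets_at m" using G by (simp add: facets_at_def)
      then show ?thesis
        using inner_facet_normal_vertex inner_facet_normal_edge_vec[OF _ F] t
        by (simp add: u_def inner_add_right)
    next
      case False
      have "t * \<bar>\<rho> G \<bullet> u\<bar> \<le> t * (K - 1)" using K[OF G] t by (intro mult_left_mono) auto
      also have "\<dots> \<le> 1" using \<open>K \<ge> 1\<close> by (simp add: t_def field_simps)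
      finally have "t * \<bar>\<rho> G \<bullet> u\<bar> \<le> 1" .
      moreover have "- (t * (\<rho> G \<bullet> u)) \<le> t * \<bar>\<rho> G \<bullet> u\<bar>" using t by (simp add: abs_if)
      ultimately have "- (t * (\<rho> G \<bullet> u)) \<le> 1" by linarith
      then show ?thesis
        using lattice_distance_to_facet(2)[OF G False] by (simp add: inner_add_right)
    qed
  qed
  then show ?thesis using t that by (simp add: u_def)
qed

lemma face_along_edge_vec:
  assumes F: "F \<in> facets_at m"
  defines "E \<equiv> P \<inter> \<Inter>(facets_at m - {F})"
  shows "E face_of P" and "\<And>x. x \<in> E \<Longrightarrow> x = m + (\<rho> F \<bullet> (x - m)) *\<^sub>R edge_vec m F"
proof -
  show "E face_of P"
  proof (cases "facets_at m - {F} = {}")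
    case True
    then show ?thesis using face_of_refl[OF convex] unfolding E_def True by simp
  next
    case False
    then have "\<Inter>(facets_at m - {F}) face_of P" "\<Inter>(facets_at m - {F}) \<subseteq> P"
      by (auto intro!: face_of_Inter simp: facets_at_def facet_of_imp_face_of dest: facet_of_imp_subset)
    then show ?thesis by (simp add: E_def Int_absorb1)
  qed
  fix x assume "x \<in> E"
  have "\<rho> G \<bullet> (x - m) = 0" if "G \<in> facets_at m" "G \<noteq> F" for G
    using that \<open>x \<in> E\<close> facet_normal_supporting(2) inner_facet_normal_vertex
    by (auto simp: E_def facets_at_def inner_diff_right)
  then have "x - m = (\<Sum>G\<in>facets_at m. if G = F then (\<rho> G \<bullet> (x - m)) *\<^sub>R edge_vec m G else 0)"
    by (subst expansion_in_edge_vecs) (intro sum.cong; simp)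
  also have "\<dots> = (\<rho> F \<bullet> (x - m)) *\<^sub>R edge_vec m F" using F finite_facets_at[of m] by simp
  finally show "x = m + (\<rho> F \<bullet> (x - m)) *\<^sub>R edge_vec m F" by (simp add: algebra_simps)
qed

text \<open>The face cut out by the other facets at \<open>m\<close> is the edge of \<open>P\<close> in direction \<open>edge_vec m F\<close>;
  its second vertex is a lattice point \<open>m + T \<cdot> edge_vec m F\<close> with \<open>T \<ge> 1\<close> an integer.\<close>

lemma vertex_plus_edge_vec_in_P:
  assumes F: "F \<in> facets_at m"
  shows "m + edge_vec m F \<in> P"
proof -
  define E where "E = P \<inter> \<Inter>(facets_at m - {F})"
  have E: "E face_of P" "\<And>x. x \<in> E \<Longrightarrow> x = m + (\<rho> F \<bullet> (x - m)) *\<^sub>R edge_vec m F"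
    using face_along_edge_vec[OF F] by (simp_all add: E_def)
  obtain t where t: "t > 0" "m + t *\<^sub>R edge_vec m F \<in> P"
    using vertex_plus_small_edge_vec_in_P[OF F] by blast
  have "m + t *\<^sub>R edge_vec m F \<in> G" if "G \<in> facets_at m - {F}" for G
  proof -
    have "\<rho> G \<bullet> (m + t *\<^sub>R edge_vec m F) = off G"
      using that inner_facet_normal_vertex inner_facet_normal_edge_vec[OF _ F] by (simp add: inner_add_right)
    moreover have "G facet_of P" using that by (simp add: facets_at_def)
    ultimately show ?thesis using t(2) by (subst facet_eq) simp_all
  qed
  then have "m + t *\<^sub>R edge_vec m F \<in> E" using t(2) by (auto simp: E_def)
  moreover have "edge_vec m F \<noteq> 0" using inner_facet_normal_edge_vec[OF F F] by auto
  ultimately have "\<not> E \<subseteq> convex hull {m}" using t(1) by auto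
  moreover have "E = convex hull {x. x extreme_point_of E}"
    using Krein_Milman_Minkowski face_of_imp_compact[OF convex compact E(1)] face_of_imp_convex[OF E(1)]
    by blast
  ultimately obtain x1 where x1: "x1 extreme_point_of E" "x1 \<noteq> m"
    by (metis (mono_tags, lifting) hull_mono mem_Collect_eq singletonI subsetI)
  have "x1 \<in> E" "x1 extreme_point_of P"
    using x1(1) extreme_point_of_face[OF E(1)] extreme_point_of_def by blast+
  define T where "T = \<rho> F \<bullet> (x1 - m)"
  have x1_eq: "x1 = m + T *\<^sub>R edge_vec m F" using E(2)[OF \<open>x1 \<in> E\<close>] by (simp add: T_def)
  have "T \<ge> 0"
    using facet_normal_supporting(3)[OF facet_of_if_facets_at[OF F]] \<open>x1 \<in> E\<close> inner_facet_normal_vertex[OF F]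
    by (simp add: T_def E_def inner_diff_right)
  moreover have "T \<noteq> 0" using x1(2) x1_eq by auto
  moreover have "T \<in> \<int>"
    unfolding T_def using facet_normal_in_lattice_pts[OF facet_of_if_facets_at[OF F]]
      lattice_pts_diff[OF extreme_point_in_lattice_pts[OF \<open>x1 extreme_point_of P\<close>]
        extreme_point_in_lattice_pts[OF m]]
    by (rule inner_lattice_pts_Ints)
  ultimately have "T \<ge> 1" using Ints_ge_1_if_pos by simp
  have "(1 - 1/T) *\<^sub>R m + (1/T) *\<^sub>R x1 \<in> P"
    using convex vertex_in_P \<open>x1 \<in> E\<close> \<open>T \<ge> 1\<close> by (intro convexD) (auto simp: E_def field_simps)
  moreover have "(1 - 1/T) *\<^sub>R m + (1/T) *\<^sub>R x1 = m + edge_vec m F"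
    using \<open>T \<ge> 1\<close> by (simp add: x1_eq algebra_simps)
  ultimately show ?thesis by simp
qed

lemma edge_simplex_subset: "edge_simplex m \<subseteq> P"
  unfolding edge_simplex_def
  using vertex_in_P vertex_plus_edge_vec_in_P by (intro hull_minimal) (auto simp: convex)

lemma unimodular_normal_matrix: "\<bar>det (normal_matrix m)\<bar> = 1"
proof (rule unimodular_if_integral_inverse[OF _ _ normal_matrix_edge_matrix])
  show "normal_matrix m $ i $ j \<in> \<int>" for i j
    using facet_normal_in_lattice_pts[OF facet_of_if_facets_at[OF facet_index_in_facets_at]]
    by (simp add: normal_matrix_def lattice_pts_def)
  show "edge_matrix m $ i $ j \<in> \<int>" for i j
    using edge_vec_in_lattice_pts by (simp add: edge_matrix_def lattice_pts_def)
qed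

lemma image_edge_simplex:
  "(\<lambda>x. normal_matrix m *v x + - (normal_matrix m *v m)) ` edge_simplex m = std_simplex"
proof -
  let ?f = "\<lambda>x. normal_matrix m *v x + - (normal_matrix m *v m)"
  have edge_image: "?f (m + edge_vec m (facet_index m j)) = axis j 1" for j
    using inner_facet_normal_edge_vec[OF facet_index_in_facets_at facet_index_in_facets_at]
    by (simp add: vec_eq_iff normal_matrix_mult axis_def inner_add_right facet_index_eq_iff)
  have "facets_at m = range (facet_index m)" using bij_facet_index by (simp add: bij_betw_def)
  then have "?f ` (\<lambda>F. m + edge_vec m F) ` facets_at m = range (\<lambda>j. axis j 1)"
    by (simp only: image_image edge_image)
  also have "\<dots> = Basis" by (auto simp: Basis_vec_def)
  finally have "?f ` insert m ((\<lambda>F. m + edge_vec m F) ` facets_at m) = insert 0 Basis" by simp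
  moreover have "?f ` edge_simplex m = convex hull (?f ` insert m ((\<lambda>F. m + edge_vec m F) ` facets_at m))"
    unfolding edge_simplex_def by (rule convex_hull_matrix_affine_image)
  ultimately show ?thesis by (simp add: std_simplex_eq)
qed

lemma lattice_equiv_std_simplex_if_bounded:
  assumes bound: "\<And>x. x \<in> P \<Longrightarrow> (\<Sum>F\<in>facets_at m. \<rho> F \<bullet> (x - m)) \<le> 1"
  shows "lattice_equiv P std_simplex"
proof -
  define A where "A = normal_matrix m"
  define t where "t = - (A *v m)"
  have coord: "(A *v x + t) $ i = \<rho> (facet_index m i) \<bullet> (x - m)" for x i
    by (simp add: A_def t_def normal_matrix_mult inner_diff_right)
  have "(\<lambda>x. A *v x + t) ` P \<subseteq> std_simplex"
  proof
    fix y assume "y \<in> (\<lambda>x. A *v x + t) ` P"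
    then obtain x where x: "x \<in> P" "y = A *v x + t" by blast
    have "0 \<le> y $ i" for i
      unfolding x(2) coord
      using facet_normal_supporting(3)[OF facet_of_if_facets_at[OF facet_index_in_facets_at] x(1)]
        inner_facet_normal_vertex[OF facet_index_in_facets_at]
      by (simp add: inner_diff_right)
    moreover have "(\<Sum>i\<in>UNIV. y $ i) \<le> 1"
      using bound[OF x(1)] unfolding x(2) coord by (simp add: sum_facets_at_reindex)
    ultimately show "y \<in> std_simplex" by (simp add: mem_std_simplex_iff)
  qed
  moreover have "std_simplex \<subseteq> (\<lambda>x. A *v x + t) ` P"
    using image_edge_simplex edge_simplex_subset by (auto simp: A_def t_def)
  moreover have "A $ i $ j \<in> \<int>" for i j
    using facet_normal_in_lattice_pts[OF facet_of_if_facets_at[OF facet_index_in_facets_at]]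
    by (simp add: A_def normal_matrix_def lattice_pts_def)
  moreover have "t \<in> lattice_pts"
    using inner_lattice_pts_Ints[OF facet_normal_in_lattice_pts[OF facet_of_if_facets_at[OF
          facet_index_in_facets_at]] extreme_point_in_lattice_pts[OF m]]
    by (simp add: t_def A_def lattice_pts_def normal_matrix_mult)
  ultimately show ?thesis
    unfolding lattice_equiv_def using unimodular_normal_matrix by (auto simp: A_def)
qed

text \<open>For a facet \<open>G\<close> missing \<open>m\<close>, with \<open>d = \<rho> G \<bullet> m - off G \<ge> 1\<close> and \<open>c\<^sub>F = \<rho> G \<bullet> edge_vec m F \<ge> -d\<close>
  (as \<open>m + edge_vec m F \<in> P\<close>), the excess of the shifted vertex over \<open>k \<cdot> off G\<close> is the sum
  \<open>(k - n) d + \<Sum>\<^sub>F (c\<^sub>F + d)\<close> of nonnegative integers.\<close>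

lemma shifted_vertex_facet_inequality:
  assumes G: "G facet_of P" "m \<notin> G" and k: "k \<ge> CARD('n)"
  shows "real k * off G + 1 \<le> \<rho> G \<bullet> (real k *\<^sub>R m + (\<Sum>F\<in>facets_at m. edge_vec m F))
         \<or> (k = CARD('n) \<and> (\<forall>F\<in>facets_at m. \<rho> G \<bullet> edge_vec m F = -(\<rho> G \<bullet> m - off G)))"
proof -
  define d where "d = \<rho> G \<bullet> m - off G"
  have d: "d \<ge> 1" "d \<in> \<int>" using lattice_distance_to_facet[OF G] by (simp_all add: d_def)
  define c where "c F = \<rho> G \<bullet> edge_vec m F" for F
  have c_d: "c F + d \<ge> 0" if "F \<in> facets_at m" for F
    using facet_normal_supporting(3)[OF G(1) vertex_plus_edge_vec_in_P[OF that]]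
    by (simp add: c_def d_def inner_add_right)
  have c: "c F \<in> \<int>" for F
    unfolding c_def using facet_normal_in_lattice_pts[OF G(1)] edge_vec_in_lattice_pts
    by (rule inner_lattice_pts_Ints)
  define excess where "excess = \<rho> G \<bullet> (real k *\<^sub>R m + (\<Sum>F\<in>facets_at m. edge_vec m F)) - real k * off G"
  have "excess = real k * d + (\<Sum>F\<in>facets_at m. c F)"
    by (simp add: excess_def d_def c_def inner_add_right inner_sum_right right_diff_distrib)
  also have "\<dots> = (real k - real CARD('n)) * d + (\<Sum>F\<in>facets_at m. c F + d)"
    by (simp add: sum.distrib facets_at_basis(1) left_diff_distrib)
  finally have excess: "excess = (real k - real CARD('n)) * d + (\<Sum>F\<in>facets_at m. c F + d)" .
  have nonneg: "(real k - real CARD('n)) * d \<ge> 0" "(\<Sum>F\<in>facets_at m. c F + d) \<ge> 0"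
    using k d c_d by (simp_all add: sum_nonneg)
  have "excess \<in> \<int>"
    unfolding excess using c d by (intro Ints_add Ints_mult Ints_diff Ints_of_nat Ints_sum) auto
  show ?thesis
  proof (cases "excess \<ge> 1")
    case True
    then show ?thesis unfolding excess_def by (intro disjI1) linarith
  next
    case False
    then have "excess = 0"
      using Ints_eq_0_if_nonneg_less_1[OF \<open>excess \<in> \<int>\<close>] nonneg excess by linarith
    then have "(real k - real CARD('n)) * d = 0" "(\<Sum>F\<in>facets_at m. c F + d) = 0"
      using nonneg excess by linarith+
    then have "k = CARD('n)" "\<forall>F\<in>facets_at m. c F + d = 0"
      using d(1) c_d sum_nonneg_eq_0_iff[OF finite_facets_at[of m], of "\<lambda>F. c F + d"] by auto
    then show ?thesis by (auto simp: c_def d_def algebra_simps)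
  qed
qed

text \<open>In the tight case \<open>\<rho> G = -d \<Sum>\<^sub>F \<rho> F\<close>, so primitivity of \<open>\<rho> G\<close> forces \<open>d = 1\<close>.\<close>

lemma sum_facet_normals_bound_if_tight:
  assumes G: "G facet_of P" "m \<notin> G"
    and tight: "\<forall>F\<in>facets_at m. \<rho> G \<bullet> edge_vec m F = -(\<rho> G \<bullet> m - off G)"
    and x: "x \<in> P"
  shows "(\<Sum>F\<in>facets_at m. \<rho> F \<bullet> (x - m)) \<le> 1"
proof -
  define d where "d = \<rho> G \<bullet> m - off G"
  have d: "d \<ge> 1" "d \<in> \<int>" using lattice_distance_to_facet[OF G] by (simp_all add: d_def)
  define w where "w = (\<Sum>F\<in>facets_at m. \<rho> F)"
  have "w \<in> lattice_pts"
    unfolding w_def using facet_normal_in_lattice_pts[OF facet_of_if_facets_at] by (rule lattice_pts_sum)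
  have "\<rho> G = (\<Sum>F\<in>facets_at m. (\<rho> G \<bullet> edge_vec m F) *\<^sub>R \<rho> F)" by (rule expansion_in_facet_normals)
  also have "\<dots> = (\<Sum>F\<in>facets_at m. (-d) *\<^sub>R \<rho> F)"
    using tight by (intro sum.cong) (simp_all add: d_def)
  also have "\<dots> = (-d) *\<^sub>R w" by (simp add: w_def scaleR_sum_right)
  finally have \<rho>G: "\<rho> G = (-d) *\<^sub>R w" .
  obtain dz where dz: "d = of_int dz" using d(2) by (rule Ints_cases)
  have "dz \<noteq> 0" using d(1) dz by auto
  moreover have "\<forall>i. \<rho> G $ i / of_int dz \<in> \<int>"
    using \<rho>G dz \<open>dz \<noteq> 0\<close> \<open>w \<in> lattice_pts\<close> by (simp add: lattice_pts_def)
  ultimately have "\<bar>dz\<bar> = 1" using facet_normal_supporting(1)[OF G(1)] unfolding primitive_vec_def by blast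
  then have "d = 1" using d(1) dz by simp
  have "off G \<le> \<rho> G \<bullet> x" using facet_normal_supporting(3)[OF G(1) x] .
  moreover have "\<rho> G \<bullet> m - off G = 1" using \<open>d = 1\<close> unfolding d_def .
  ultimately have "\<rho> G \<bullet> (x - m) \<ge> -1" by (simp add: inner_diff_right)
  then have "w \<bullet> (x - m) \<le> 1" using \<rho>G \<open>d = 1\<close> by simp
  then show ?thesis by (simp add: w_def inner_sum_left)
qed

text \<open>A unimodular map onto \<open>\<Delta>\<^sub>n\<close> sends the \<open>n + 1\<close> lattice points \<open>m, m + edge_vec m F\<close> of \<open>P\<close>
  to lattice points of \<open>\<Delta>\<^sub>n\<close>, i.e. onto its vertices.\<close>

lemma edge_simplex_eq_if_lattice_equiv:
  assumes "lattice_equiv P std_simplex"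
  shows "P = edge_simplex m"
proof -
  obtain A :: "real^'n^'n" and t where A: "\<forall>i j. A $ i $ j \<in> \<int>" "\<bar>det A\<bar> = 1"
    and "t \<in> lattice_pts" and std: "std_simplex = (\<lambda>x. A *v x + t) ` P"
    using assms unfolding lattice_equiv_def by blast
  define f where "f = (\<lambda>x. A *v x + t)"
  have "inj ((*v) A)" using A(2) invertible_det_nz[of A] inj_matrix_vector_mult by fastforce
  then have "inj f" unfolding f_def inj_def by auto
  define L where "L = insert m ((\<lambda>F. m + edge_vec m F) ` facets_at m)"
  have "L \<subseteq> P" using vertex_in_P vertex_plus_edge_vec_in_P by (auto simp: L_def)
  have "f x \<in> lattice_pts" if "x \<in> L" for x
  proof -
    have "x \<in> lattice_pts"
      using that extreme_point_in_lattice_pts[OF m] edge_vec_in_lattice_pts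
      by (auto simp: L_def intro: lattice_pts_add)
    then have "A *v x \<in> lattice_pts"
      using A(1) by (auto simp: matrix_vector_mult_def lattice_pts_def intro!: Ints_sum Ints_mult)
    then show ?thesis unfolding f_def using \<open>t \<in> lattice_pts\<close> by (rule lattice_pts_add)
  qed
  moreover have "f ` L \<subseteq> std_simplex" using \<open>L \<subseteq> P\<close> std by (auto simp: f_def)
  ultimately have fL_sub: "f ` L \<subseteq> insert 0 Basis" using lattice_pts_in_std_simplex by blast
  have "inj_on (\<lambda>F. m + edge_vec m F) (facets_at m)"
  proof (rule inj_onI)
    fix F G assume "F \<in> facets_at m" "G \<in> facets_at m" "m + edge_vec m F = m + edge_vec m G"
    then have "\<rho> F \<bullet> edge_vec m G = 1" using inner_facet_normal_edge_vec[of F F] by simp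
    then show "F = G"
      using inner_facet_normal_edge_vec[OF \<open>F \<in> facets_at m\<close> \<open>G \<in> facets_at m\<close>] by (simp split: if_splits)
  qed
  moreover have "m \<notin> (\<lambda>F. m + edge_vec m F) ` facets_at m"
    using inner_facet_normal_edge_vec by force
  ultimately have "card L = Suc CARD('n)"
    by (simp add: L_def card_image finite_facets_at facets_at_basis(1))
  then have "card (f ` L) = card (insert 0 (Basis :: (real^'n) set))"
    using card_image[OF inj_on_subset[OF \<open>inj f\<close>]] by (simp add: card_insert_if)
  then have "f ` L = insert 0 Basis" using card_subset_eq[OF _ fL_sub] by simp
  then have "f ` P = f ` edge_simplex m"
    using std unfolding f_def L_def edge_simplex_def std_simplex_eq
    by (simp add: convex_hull_matrix_affine_image)
  then show ?thesis using \<open>inj f\<close> by (simp add: inj_image_eq_iff)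
qed

lemma inner_sum_facet_normals_le_if_lattice_equiv:
  assumes "lattice_equiv P std_simplex" "x \<in> P"
  shows "(\<Sum>F\<in>facets_at m. \<rho> F) \<bullet> x \<le> (\<Sum>F\<in>facets_at m. \<rho> F) \<bullet> m + 1"
proof -
  have "edge_simplex m \<subseteq> {x. (\<Sum>F\<in>facets_at m. \<rho> F) \<bullet> x \<le> (\<Sum>F\<in>facets_at m. \<rho> F) \<bullet> m + 1}"
    unfolding edge_simplex_def
    by (rule hull_minimal) (auto simp: convex_halfspace_le inner_add_right sum_inner_facet_normal_edge_vec(2))
  then show ?thesis using edge_simplex_eq_if_lattice_equiv assms by blast
qed

lemma opposite_facet_if_lattice_equiv:
  assumes eq: "lattice_equiv P std_simplex"
  obtains G where "G facet_of P" "\<rho> G = - (\<Sum>F\<in>facets_at m. \<rho> F)"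
    "off G = - ((\<Sum>F\<in>facets_at m. \<rho> F) \<bullet> m) - 1"
proof -
  define w where "w = (\<Sum>F\<in>facets_at m. \<rho> F)"
  define G where "G = P \<inter> {x. w \<bullet> x = w \<bullet> m + 1}"
  have w_edge: "w \<bullet> edge_vec m F = 1" if "F \<in> facets_at m" for F
    using sum_inner_facet_normal_edge_vec(2)[OF that] by (simp add: w_def)
  have P_le: "P \<subseteq> {x. w \<bullet> x \<le> w \<bullet> m + 1}"
    using inner_sum_facet_normals_le_if_lattice_equiv[OF eq] by (auto simp: w_def)
  have face: "G face_of P"
    unfolding G_def using P_le by (intro face_of_Int_supporting_hyperplane_le[OF convex]) auto
  have "facets_at m \<noteq> {}" using facets_at_basis(1) by auto
  then obtain F0 where F0: "F0 \<in> facets_at m" by blast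
  have edges_G: "(\<lambda>F. m + edge_vec m F) ` facets_at m \<subseteq> G"
    using vertex_plus_edge_vec_in_P w_edge by (auto simp: G_def inner_add_right)
  have "aff_dim P = aff_dim (insert m ((\<lambda>F. m + edge_vec m F) ` facets_at m))"
    using edge_simplex_eq_if_lattice_equiv[OF eq] aff_dim_convex_hull by (metis edge_simplex_def)
  also have "\<dots> \<le> aff_dim ((\<lambda>F. m + edge_vec m F) ` facets_at m) + 1"
    by (simp add: aff_dim_insert)
  also have "\<dots> \<le> aff_dim G + 1" using aff_dim_subset[OF edges_G] by simp
  finally have "aff_dim P \<le> aff_dim G + 1" .
  moreover have "m \<notin> G" by (simp add: G_def)
  then have "G \<noteq> P" using vertex_in_P by blast
  then have "aff_dim G < aff_dim P" using face_of_aff_dim_lt[OF convex face] by blast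
  moreover have "G \<noteq> {}" using edges_G F0 by blast
  ultimately have Gf: "G facet_of P" unfolding facet_of_def using face by simp
  have "w \<noteq> 0" using w_edge[OF F0] by auto
  then obtain \<mu> where "\<mu> > 0" and n: "\<rho> G = (-\<mu>) *\<^sub>R w" and o: "off G = -\<mu> * (w \<bullet> m + 1)"
    using facet_normal_offset_eq[OF Gf _ P_le G_def] by blast
  have "w \<in> lattice_pts"
    unfolding w_def using facet_normal_in_lattice_pts[OF facet_of_if_facets_at] by (rule lattice_pts_sum)
  have "primitive_vec (-w)"
    using primitive_vec_if_inner_eq_1[OF lattice_pts_uminus[OF \<open>w \<in> lattice_pts\<close>]
        lattice_pts_uminus[OF edge_vec_in_lattice_pts]] w_edge[OF F0] by simp
  moreover have "primitive_vec (\<mu> *\<^sub>R (-w))" using facet_normal_supporting(1)[OF Gf] n by simp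
  ultimately have "\<mu> = 1" using primitive_vec_scaleR_eq_1 \<open>\<mu> > 0\<close> by blast
  then show ?thesis using that Gf n o by (simp add: w_def)
qed

text \<open>Sum the inequalities of \<open>(aP)^(b)\<close> for the \<open>n\<close> facets at \<open>m\<close> and the opposite facet.\<close>

lemma scale_ge_if_shrink_nonempty:
  assumes eq: "lattice_equiv P std_simplex" and a: "a > 0"
    and x: "x \<in> shrink ((\<lambda>x. a *\<^sub>R x) ` P) b"
  shows "a \<ge> (real CARD('n) + 1) * b"
proof -
  define w where "w = (\<Sum>F\<in>facets_at m. \<rho> F)"
  have ineq: "a * off F + b \<le> \<rho> F \<bullet> x" if "F facet_of P" for F
    using x that mem_shrink_scaleR_image_iff[OF a] by blast
  obtain G where G: "G facet_of P" "\<rho> G = - w" "off G = - (w \<bullet> m) - 1"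
    using opposite_facet_if_lattice_equiv[OF eq] by (auto simp: w_def)
  have "a * (- (w \<bullet> m) - 1) + b \<le> - (w \<bullet> x)" using ineq[OF G(1)] unfolding G(2,3) by simp
  moreover have "(\<Sum>F\<in>facets_at m. a * (\<rho> F \<bullet> m) + b) \<le> (\<Sum>F\<in>facets_at m. \<rho> F \<bullet> x)"
    using ineq[OF facet_of_if_facets_at] inner_facet_normal_vertex by (intro sum_mono) simp
  then have "a * (w \<bullet> m) + real CARD('n) * b \<le> w \<bullet> x"
    by (simp add: sum.distrib w_def inner_sum_left sum_distrib_left[symmetric] facets_at_basis(1))
  ultimately show ?thesis by (simp add: algebra_simps)
qed

lemma shifted_vertex_in_shrink:
  assumes k: "k \<ge> CARD('n)" and not_simplex: "k = CARD('n) \<Longrightarrow> \<not> lattice_equiv P std_simplex"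
  shows "real k *\<^sub>R m + (\<Sum>F\<in>facets_at m. edge_vec m F) \<in> shrink ((\<lambda>x. real k *\<^sub>R x) ` P) 1"
proof -
  have k_pos: "real k > 0" using k by (simp add: less_le_trans[of 0 "CARD('n)" k])
  show ?thesis unfolding mem_shrink_scaleR_image_iff[OF k_pos]
  proof (intro allI impI)
    fix G assume G: "G facet_of P"
    show "real k * off G + 1 \<le> \<rho> G \<bullet> (real k *\<^sub>R m + (\<Sum>F\<in>facets_at m. edge_vec m F))"
    proof (cases "m \<in> G")
      case True
      then have "G \<in> facets_at m" using G by (simp add: facets_at_def)
      then show ?thesis
        using inner_facet_normal_vertex sum_inner_facet_normal_edge_vec(1)
        by (simp add: inner_add_right inner_sum_right)
    next
      case False
      have "\<not> (k = CARD('n) \<and> (\<forall>F\<in>facets_at m. \<rho> G \<bullet> edge_vec m F = -(\<rho> G \<bullet> m - off G)))"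
        using not_simplex lattice_equiv_std_simplex_if_bounded sum_facet_normals_bound_if_tight[OF G False]
        by blast
      then show ?thesis using shifted_vertex_facet_inequality[OF G False k] by blast
    qed
  qed
qed

end

lemma s_spanned_scaleR_image_1:
  assumes k: "k \<ge> CARD('n)" and not_simplex: "k = CARD('n) \<Longrightarrow> \<not> lattice_equiv P std_simplex"
  shows "s_spanned ((\<lambda>x. real k *\<^sub>R x) ` P) 1"
proof -
  have k_pos: "real k > 0" using k by (simp add: less_le_trans[of 0 "CARD('n)" k])
  show ?thesis unfolding s_spanned_scaleR_image_iff[OF k_pos]
  proof (intro allI impI)
    fix m x assume m: "m extreme_point_of P"
      and x: "\<forall>F. F facet_of P \<and> m \<in> F \<longrightarrow> \<rho> F \<bullet> x = real k * off F + 1"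
    have "\<rho> F \<bullet> (x - real k *\<^sub>R m) = 1" if "F \<in> facets_at m" for F
      using x that inner_facet_normal_vertex[OF m that] by (simp add: facets_at_def inner_diff_right)
    then have "x - real k *\<^sub>R m = (\<Sum>F\<in>facets_at m. edge_vec m F)"
      by (subst expansion_in_edge_vecs[OF m]) simp
    then show "x \<in> shrink ((\<lambda>x. real k *\<^sub>R x) ` P) 1"
      using shifted_vertex_in_shrink[OF m k not_simplex] by (simp add: algebra_simps)
  qed
qed

lemma shrink_nonempty_if_s_spanned:
  assumes a: "a > 0" and spanned: "s_spanned ((\<lambda>x. a *\<^sub>R x) ` P) b"
  shows "shrink ((\<lambda>x. a *\<^sub>R x) ` P) b \<noteq> {}"
proof -
  obtain m where m: "m extreme_point_of P" by (rule extreme_point_exists)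
  define x where "x = a *\<^sub>R m + b *\<^sub>R (\<Sum>F\<in>facets_at m. edge_vec m F)"
  have "\<rho> F \<bullet> x = a * off F + b" if "F facet_of P" "m \<in> F" for F
  proof -
    have F: "F \<in> facets_at m" using that by (simp add: facets_at_def)
    have "\<rho> F \<bullet> x = a * (\<rho> F \<bullet> m) + b * (\<Sum>G\<in>facets_at m. \<rho> F \<bullet> edge_vec m G)"
      by (simp add: x_def inner_add_right inner_sum_right)
    then show ?thesis
      using inner_facet_normal_vertex[OF m F] sum_inner_facet_normal_edge_vec(1)[OF m F] by simp
  qed
  then have "x \<in> shrink ((\<lambda>x. a *\<^sub>R x) ` P) b"
    using spanned m unfolding s_spanned_scaleR_image_iff[OF a] by blast
  then show ?thesis by blast
qed

lemma lattice_point_in_shrink: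
  "shrink ((\<lambda>x. real (CARD('n) + 1) *\<^sub>R x) ` P) 1 \<inter> lattice_pts \<noteq> {}"
proof -
  obtain m where m: "m extreme_point_of P" by (rule extreme_point_exists)
  have "real (CARD('n) + 1) *\<^sub>R m + (\<Sum>F\<in>facets_at m. edge_vec m F)
      \<in> shrink ((\<lambda>x. real (CARD('n) + 1) *\<^sub>R x) ` P) 1"
    by (rule shifted_vertex_in_shrink[OF m]) auto
  moreover have "real (CARD('n) + 1) *\<^sub>R m + (\<Sum>F\<in>facets_at m. edge_vec m F) \<in> lattice_pts"
    using extreme_point_in_lattice_pts[OF m] edge_vec_in_lattice_pts
    by (intro lattice_pts_add lattice_pts_scaleR_of_nat lattice_pts_sum)
  ultimately show ?thesis by blast
qed

subsection \<open>Codegree and spanning constant\<close>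

lemma tau_le_if_s_spanned:
  assumes "k > 0" "s_spanned ((\<lambda>x. real k *\<^sub>R x) ` P) 1"
  shows "tau P \<le> real k"
proof -
  have "real k \<in> {real a / real b | a b::nat. a > 0 \<and> b > 0 \<and>
                    s_spanned ((\<lambda>x. real a *\<^sub>R x) ` P) (real b)}"
    using assms by (intro CollectI exI[of _ k] exI[of _ "1::nat"]) simp
  then show ?thesis unfolding tau_def by (intro cInf_lower bdd_belowI[of _ 0]) auto
qed

lemma tau_le_card_plus_1: "tau P \<le> real CARD('n) + 1"
  using tau_le_if_s_spanned[of "CARD('n) + 1"] s_spanned_scaleR_image_1[of "CARD('n) + 1"] by simp

lemma tau_le_card_if_not_simplex: "\<not> lattice_equiv P std_simplex \<Longrightarrow> tau P \<le> real CARD('n)"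
  using tau_le_if_s_spanned s_spanned_scaleR_image_1 by simp

lemma codeg_Q_le_tau: "codeg_Q P \<le> tau P"
  unfolding codeg_Q_def tau_def
proof (rule cInf_superset_mono)
  have "real (CARD('n) + 1) \<in>
      {real a / real b | a b::nat. a > 0 \<and> b > 0 \<and> s_spanned ((\<lambda>x. real a *\<^sub>R x) ` P) (real b)}"
    using s_spanned_scaleR_image_1[of "CARD('n) + 1"]
    by (intro CollectI exI[of _ "CARD('n) + 1"] exI[of _ "1::nat"]) simp
  then show "{real a / real b | a b::nat. a > 0 \<and> b > 0 \<and> s_spanned ((\<lambda>x. real a *\<^sub>R x) ` P) (real b)} \<noteq> {}"
    by blast
  show "bdd_below {real a / real b | a b::nat. a > 0 \<and> b > 0 \<and> shrink ((\<lambda>x. real a *\<^sub>R x) ` P) (real b) \<noteq> {}}"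
    by (intro bdd_belowI[of _ 0]) auto
  show "{real a / real b | a b::nat. a > 0 \<and> b > 0 \<and> s_spanned ((\<lambda>x. real a *\<^sub>R x) ` P) (real b)}
      \<subseteq> {real a / real b | a b::nat. a > 0 \<and> b > 0 \<and> shrink ((\<lambda>x. real a *\<^sub>R x) ` P) (real b) \<noteq> {}}"
  proof
    fix z assume "z \<in> {real a / real b | a b::nat. a > 0 \<and> b > 0 \<and> s_spanned ((\<lambda>x. real a *\<^sub>R x) ` P) (real b)}"
    then obtain a b :: nat where "z = real a / real b" "a > 0" "b > 0"
      and "s_spanned ((\<lambda>x. real a *\<^sub>R x) ` P) (real b)" by blast
    moreover have "shrink ((\<lambda>x. real a *\<^sub>R x) ` P) (real b) \<noteq> {}"
      using shrink_nonempty_if_s_spanned calculation by simp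
    ultimately show "z \<in> {real a / real b | a b::nat. a > 0 \<and> b > 0 \<and> shrink ((\<lambda>x. real a *\<^sub>R x) ` P) (real b) \<noteq> {}}"
      by (intro CollectI exI[of _ a] exI[of _ b]) simp
  qed
qed

lemma codeg_Q_ge_if_simplex:
  assumes "lattice_equiv P std_simplex"
  shows "codeg_Q P \<ge> real CARD('n) + 1"
  unfolding codeg_Q_def
proof (rule cInf_greatest)
  obtain m where m: "m extreme_point_of P" by (rule extreme_point_exists)
  show "real CARD('n) + 1 \<le> z"
    if z_mem: "z \<in> {real a / real b | a b::nat. a > 0 \<and> b > 0 \<and> shrink ((\<lambda>x. real a *\<^sub>R x) ` P) (real b) \<noteq> {}}"
    for z
  proof -
    obtain a b :: nat where z: "z = real a / real b" "a > 0" "b > 0"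
      and "shrink ((\<lambda>x. real a *\<^sub>R x) ` P) (real b) \<noteq> {}" using z_mem by blast
    then obtain x where "x \<in> shrink ((\<lambda>x. real a *\<^sub>R x) ` P) (real b)" by blast
    then have "real a \<ge> (real CARD('n) + 1) * real b"
      using scale_ge_if_shrink_nonempty[OF m assms] z(2) by simp
    then show ?thesis using z by (simp add: le_divide_eq)
  qed
  have "real (CARD('n) + 1) \<in>
      {real a / real b | a b::nat. a > 0 \<and> b > 0 \<and> shrink ((\<lambda>x. real a *\<^sub>R x) ` P) (real b) \<noteq> {}}"
    using lattice_point_in_shrink by (intro CollectI exI[of _ "CARD('n) + 1"] exI[of _ "1::nat"]) auto
  then show "{real a / real b | a b::nat. a > 0 \<and> b > 0 \<and> shrink ((\<lambda>x. real a *\<^sub>R x) ` P) (real b) \<noteq> {}} \<noteq> {}"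
    by blast
qed

lemma codeg_eq_if_simplex:
  assumes "lattice_equiv P std_simplex"
  shows "codeg P = CARD('n) + 1"
  unfolding codeg_def
proof (rule Least_equality)
  show "1 \<le> CARD('n) + 1 \<and> shrink ((\<lambda>x. real (CARD('n) + 1) *\<^sub>R x) ` P) 1 \<inter> lattice_pts \<noteq> {}"
    using lattice_point_in_shrink by simp
  obtain m where m: "m extreme_point_of P" by (rule extreme_point_exists)
  fix k assume k: "1 \<le> k \<and> shrink ((\<lambda>x. real k *\<^sub>R x) ` P) 1 \<inter> lattice_pts \<noteq> {}"
  then obtain x where "x \<in> shrink ((\<lambda>x. real k *\<^sub>R x) ` P) 1" by blast
  then have "real k \<ge> (real CARD('n) + 1) * 1"
    using scale_ge_if_shrink_nonempty[OF m assms, of "real k" x 1] k by simp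
  then have "real (CARD('n) + 1) \<le> real k" by simp
  then show "CARD('n) + 1 \<le> k" by (simp only: of_nat_le_iff)
qed

end

theorem corollary2p3:
  fixes P :: "(real^'n) set"
  assumes "lattice_polytope P" and "aff_dim P = int CARD('n)" and "smooth_polytope P"
  shows "((codeg P = CARD('n) + 1 \<and> codeg_Q P = real CARD('n) + 1 \<and> tau P = real CARD('n) + 1)
            \<longleftrightarrow> lattice_equiv P std_simplex)
     \<and> (\<not> lattice_equiv P std_simplex \<longrightarrow> codeg_Q P \<le> tau P \<and> tau P \<le> real CARD('n))"
proof -
  interpret smooth_lattice_polytope P using assms by unfold_locales
  have "codeg P = CARD('n) + 1 \<and> codeg_Q P = real CARD('n) + 1 \<and> tau P = real CARD('n) + 1"
    if "lattice_equiv P std_simplex"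
    using codeg_eq_if_simplex[OF that] codeg_Q_ge_if_simplex[OF that] codeg_Q_le_tau tau_le_card_plus_1
    by linarith
  then show ?thesis using tau_le_card_if_not_simplex codeg_Q_le_tau by force
qed

end
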